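(* The elements $\mathbf{V}_M$, where $M$ are connected $k$-packed matrices, form a basis of the vector space of primitive elements of $\mathbf{PM}_k$.
   Context: Let $k \geq 1$, $A_k := \{0,1,\dots,k\}$. A $k$-packed matrix of size $n$ is an $n\times n$ matrix with entries in $A_k$ with at least one nonzero entry in each row and column. $\mathbf{PM}_k$ is the Hopf algebra with fundamental basis $(\mathbf{F}_M)$ indexed by $k$-packed matrices, with product $\mathbf{F}_{M_1}\cdot\mathbf{F}_{M_2} = \sum_{M \in \mathrm{Sh}_c(M_1,M_2)} \mathbf{F}_M$ (for sizes $n_1,n_2$, $\mathrm{Sh}_c(M_1,M_2)$ is the set of all matrices obtained by shuffling the columns of $M_1$ with an $n_2 \times n_1$ zero block placed below it, with the columns of $M_2$ with an $n_1\times n_2$ zero block placed above it) and coproduct $\Delta(\mathbf{F}_M) = \sum_{M = [M_1|M_2]} \mathbf{F}_{\operatorname{cp}(M_1)} \otimes \mathbf{F}_{\operatorname{cp}(M_2)}$ (sum over splittings into left and right column blocks with square compressions, $\operatorname{cp}$ deleting null rows and columns). $\mathbf{PM}_k^\star$ is its dual with adjoint basis $(\mathbf{F}^\star_M)$, whose product is $\mathbf{F}^\star_{M_1}\cdot\mathbf{F}^\star_{M_2} = \sum \mathbf{F}^\star_M$ over all $M$ obtained by shuffling the rows of $[M_1 \mid 0_{n_1\times n_2}]$ with the rows of $[0_{n_2\times n_1} \mid M_2]$. Let $\mathrm{ov}(M_1,M_2) := \begin{pmatrix} M_1 & 0 \\ 0 & M_2 \end{pmatrix}$. A $k$-packed matrix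 $M \neq \emptyset$ is connected if $M = \mathrm{ov}(M_1,M_2)$ implies $M_1 = M$ or $M_2 = M$; every $k$-packed matrix factors uniquely as $M = \mathrm{ov}(M_1, \mathrm{ov}(M_2, \dots))$ with connected $M_1,\dots,M_r$. Set $\mathbf{W}^M := \mathbf{F}^\star_{M_1} \cdot \ldots \cdot \mathbf{F}^\star_{M_r}$ for this factorization; the $\mathbf{W}^M$ form a basis of $\mathbf{PM}_k^\star$, and $\mathbf{V}_M$ denotes the elements of $\mathbf{PM}_k$ forming the basis adjoint to $(\mathbf{W}^M)$. *)

theory Defs
  imports Main "HOL.Modules" "HOL-Library.Function_Algebras"
begin

text \<open>A matrix is a list of rows.\<close>

type_synonym mat = "nat list list"

definition is_square :: "mat \<Rightarrow> bool" where
  "is_square M \<longleftrightarrow> (\<forall>r\<in>set M. length r = length M)"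

definition packed :: "nat \<Rightarrow> mat \<Rightarrow> bool" where
  "packed k M \<longleftrightarrow> is_square M
     \<and> (\<forall>r\<in>set M. (\<forall>x\<in>set r. x \<le> k) \<and> (\<exists>x\<in>set r. x \<noteq> 0))
     \<and> (\<forall>j<length M. \<exists>r\<in>set M. r ! j \<noteq> 0)"

text \<open>Compression: delete null rows and null columns.\<close>
definition cp :: "mat \<Rightarrow> mat" where
  "cp X = map (\<lambda>r. nths r {j. \<exists>r'\<in>set X. j < length r' \<and> r' ! j \<noteq> 0})
             (filter (\<lambda>r. \<exists>x\<in>set r. x \<noteq> 0) X)"

text \<open>Elements of PM_k (and of its graded dual): finitely supported coefficient
  functions on k-packed matrices, over a field.\<close>
definition PMk :: "nat \<Rightarrow> (mat \<Rightarrow> 'a::field) set" where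
  "PMk k = {x. finite {M. x M \<noteq> 0} \<and> (\<forall>M. x M \<noteq> 0 \<longrightarrow> packed k M)}"

definition scl :: "'a::field \<Rightarrow> (mat \<Rightarrow> 'a) \<Rightarrow> (mat \<Rightarrow> 'a)" where
  "scl c x = (\<lambda>M. c * x M)"

text \<open>Basis element F_M (resp. F*_M) as a coefficient function.\<close>
definition basis_elt :: "mat \<Rightarrow> mat \<Rightarrow> 'a::field" where
  "basis_elt M = (\<lambda>N. if N = M then 1 else 0)"

definition unit_elt :: "mat \<Rightarrow> 'a::field" where
  "unit_elt = basis_elt []"

text \<open>Coproduct: coefficient of F_A (x) F_B in Delta(F_M): number of column
  splittings M = [M1|M2] (after j columns) with square compressions
  cp M1 = A, cp M2 = B.\<close>
definition dcoef :: "mat \<Rightarrow> mat \<Rightarrow> mat \<Rightarrow> nat" where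
  "dcoef M A B = card {j. j \<le> length M \<and>
       is_square (cp (map (take j) M)) \<and> is_square (cp (map (drop j) M)) \<and>
       cp (map (take j) M) = A \<and> cp (map (drop j) M) = B}"

text \<open>Elements of PM_k (x) PM_k as coefficient functions on pairs.\<close>
definition coprod :: "(mat \<Rightarrow> 'a::field) \<Rightarrow> (mat \<times> mat \<Rightarrow> 'a)" where
  "coprod x = (\<lambda>(A, B). \<Sum>M\<in>{M. x M \<noteq> 0}. x M * of_nat (dcoef M A B))"

definition tens :: "(mat \<Rightarrow> 'a::field) \<Rightarrow> (mat \<Rightarrow> 'a) \<Rightarrow> (mat \<times> mat \<Rightarrow> 'a)" where
  "tens x y = (\<lambda>(A, B). x A * y B)"

definition prim :: "nat \<Rightarrow> (mat \<Rightarrow> 'a::field) set" where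
  "prim k = {x \<in> PMk k. coprod x = tens x unit_elt + tens unit_elt x}"

definition pad_right :: "mat \<Rightarrow> nat \<Rightarrow> mat" where
  "pad_right M n = map (\<lambda>r. r @ replicate n 0) M"

definition pad_left :: "nat \<Rightarrow> mat \<Rightarrow> mat" where
  "pad_left n M = map (\<lambda>r. replicate n 0 @ r) M"

definition row_shuffles :: "mat \<Rightarrow> mat \<Rightarrow> mat set" where
  "row_shuffles M1 M2 = shuffles (pad_right M1 (length M2)) (pad_left (length M1) M2)"

text \<open>Product of PM_k^*, bilinear extension of F*_M1 . F*_M2 = sum of F*_M over
  the row shuffles.\<close>
definition dprod :: "(mat \<Rightarrow> 'a::field) \<Rightarrow> (mat \<Rightarrow> 'a) \<Rightarrow> (mat \<Rightarrow> 'a)" where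
  "dprod a b = (\<lambda>N. \<Sum>p\<in>{p. a (fst p) \<noteq> 0 \<and> b (snd p) \<noteq> 0}.
       a (fst p) * b (snd p) * (if N \<in> row_shuffles (fst p) (snd p) then 1 else 0))"

definition ov :: "mat \<Rightarrow> mat \<Rightarrow> mat" where
  "ov M1 M2 = pad_right M1 (length M2) @ pad_left (length M1) M2"

definition connected :: "nat \<Rightarrow> mat \<Rightarrow> bool" where
  "connected k M \<longleftrightarrow> packed k M \<and> M \<noteq> [] \<and>
     (\<forall>M1 M2. packed k M1 \<longrightarrow> packed k M2 \<longrightarrow> M = ov M1 M2 \<longrightarrow> M1 = M \<or> M2 = M)"

text \<open>Factorisation M = ov(M1, ov(M2, ...)) into connected matrices (unique).\<close>
definition factors :: "nat \<Rightarrow> mat \<Rightarrow> mat list" where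
  "factors k M = (SOME Ms. (\<forall>X\<in>set Ms. connected k X) \<and> foldr ov Ms [] = M)"

definition W :: "nat \<Rightarrow> mat \<Rightarrow> mat \<Rightarrow> 'a::field" where
  "W k M = foldr dprod (map basis_elt (factors k M)) unit_elt"

definition pairing :: "(mat \<Rightarrow> 'a::field) \<Rightarrow> (mat \<Rightarrow> 'a) \<Rightarrow> 'a" where
  "pairing w v = (\<Sum>N\<in>{N. v N \<noteq> 0}. w N * v N)"

definition V :: "nat \<Rightarrow> mat \<Rightarrow> mat \<Rightarrow> 'a::field" where
  "V k M = (THE v. v \<in> PMk k \<and>
       (\<forall>M'. packed k M' \<longrightarrow> pairing (W k M') v = (if M' = M then 1 else 0)))"

end

theory Submission
  imports Defs "HOL-Library.List_Lexorder"
begin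

text \<open>
  Order the k-packed matrices of each size lexicographically by rows. Since shuffling the rows
  of [M1|0] with those of [0|M2] can only move the (larger) rows of the first block down,
  W^M is a combination of F*_N with N \<le> M and coefficient 1 at N = M. Hence the pairing
  with the W^M is nondegenerate, the adjoint basis V_M exists, and every x expands as
  x = \<Sum> <W^M, x> V_M.

  The coproduct of PM_k is the transpose of the row shuffle product of PM_k*, so x is primitive
  iff x(\<emptyset>) = 0 and x pairs to zero with F*_A F*_B for all nonempty A, B. For a disconnected M,
  W^M = F*_{M1} W^{M'} is a combination of such products, so primitive elements only involve
  V_M with M connected. Conversely V_M is primitive for connected M: by associativity of the
  shuffle product and triangularity, each F*_A F*_B with A, B nonempty is a combination of
  W^{M'} with M' disconnected, and these pair to zero with V_M.
\<close>

section \<open>Shuffles and the lexicographic order\<close>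

lemma sum_fun_apply: "(\<Sum>i\<in>A. f i) x = (\<Sum>i\<in>A. f i x)"
  by (induction A rule: infinite_finite_induct) auto

lemma map_shuffles: "map f ` shuffles xs ys = shuffles (map f xs) (map f ys)"
  by (induction xs ys rule: shuffles.induct) (auto simp: image_Un image_image)

lemma append_in_shuffles: "xs @ ys \<in> shuffles xs ys"
  by (induction xs) (auto intro: Cons_in_shuffles_leftI)

lemma in_shuffles_iff_filter:
  assumes "\<forall>x\<in>set xs. P x" "\<forall>y\<in>set ys. \<not> P y"
  shows "zs \<in> shuffles xs ys \<longleftrightarrow> filter P zs = xs \<and> filter (\<lambda>z. \<not> P z) zs = ys"
proof -
  have "zs \<in> shuffles xs ys \<longleftrightarrow> partition P zs = (xs, ys)"
    using inv_image_partition[of xs P ys] assms by blast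
  then show ?thesis by (simp add: o_def)
qed

lemma nested_shuffles_left:
  assumes x: "\<forall>x\<in>set xs. P1 x \<and> P2 x" and y: "\<forall>y\<in>set ys. \<not> P1 y \<and> P2 y"
    and z: "\<forall>z\<in>set zs. \<not> P1 z \<and> \<not> P2 z"
  shows "{us \<in> shuffles xs ys. ws \<in> shuffles us zs} =
    (if filter P1 ws = xs \<and> filter (\<lambda>w. \<not> P1 w \<and> P2 w) ws = ys \<and> filter (\<lambda>w. \<not> P2 w) ws = zs
     then {filter P2 ws} else {})"
proof -
  have outer: "ws \<in> shuffles us zs \<longleftrightarrow> filter P2 ws = us \<and> filter (\<lambda>w. \<not> P2 w) ws = zs"
    if "us \<in> shuffles xs ys" for us
  proof (rule in_shuffles_iff_filter)
    show "\<forall>u\<in>set us. P2 u" using set_shuffles[OF that] x y by blast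
  qed (use z in auto)
  show ?thesis
  proof (cases "filter (\<lambda>w. \<not> P2 w) ws = zs")
    case True
    have "P1 w \<Longrightarrow> P2 w" if "w \<in> set ws" for w
    proof (rule ccontr)
      assume "P1 w" "\<not> P2 w"
      then have "w \<in> set zs" using that True[symmetric] by auto
      then show False using z \<open>P1 w\<close> by blast
    qed
    then have "filter P1 (filter P2 ws) = filter P1 ws"
      by (auto simp: filter_filter intro: filter_cong)
    moreover have "filter (\<lambda>w. \<not> P1 w) (filter P2 ws) = filter (\<lambda>w. \<not> P1 w \<and> P2 w) ws"
      by (auto simp: filter_filter intro: filter_cong)
    moreover have "us \<in> shuffles xs ys \<longleftrightarrow> filter P1 us = xs \<and> filter (\<lambda>w. \<not> P1 w) us = ys" for us
      by (rule in_shuffles_iff_filter) (use x y in auto)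
    ultimately show ?thesis using True outer by auto
  qed (use outer in auto)
qed

lemma nested_shuffles_right:
  assumes x: "\<forall>x\<in>set xs. P1 x \<and> P2 x" and y: "\<forall>y\<in>set ys. \<not> P1 y \<and> P2 y"
    and z: "\<forall>z\<in>set zs. \<not> P1 z \<and> \<not> P2 z"
  shows "{vs \<in> shuffles ys zs. ws \<in> shuffles xs vs} =
    (if filter P1 ws = xs \<and> filter (\<lambda>w. \<not> P1 w \<and> P2 w) ws = ys \<and> filter (\<lambda>w. \<not> P2 w) ws = zs
     then {filter (\<lambda>w. \<not> P1 w) ws} else {})"
proof -
  have outer: "ws \<in> shuffles xs vs \<longleftrightarrow> filter P1 ws = xs \<and> filter (\<lambda>w. \<not> P1 w) ws = vs"
    if "vs \<in> shuffles ys zs" for vs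
  proof (rule in_shuffles_iff_filter)
    show "\<forall>v\<in>set vs. \<not> P1 v" using set_shuffles[OF that] y z by blast
  qed (use x in auto)
  show ?thesis
  proof (cases "filter P1 ws = xs")
    case True
    have "P2 w" if "w \<in> set ws" "P1 w" for w
    proof -
      have "w \<in> set (filter P1 ws)" using that by simp
      then have "w \<in> set xs" by (simp only: True)
      then show "P2 w" using x by blast
    qed
    then have "filter (\<lambda>w. \<not> P2 w) (filter (\<lambda>w. \<not> P1 w) ws) = filter (\<lambda>w. \<not> P2 w) ws"
      by (auto simp: filter_filter intro: filter_cong)
    moreover have "filter P2 (filter (\<lambda>w. \<not> P1 w) ws) = filter (\<lambda>w. \<not> P1 w \<and> P2 w) ws"
      by (simp add: filter_filter)
    moreover have "vs \<in> shuffles ys zs \<longleftrightarrow> filter P2 vs = ys \<and> filter (\<lambda>w. \<not> P2 w) vs = zs" for vs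
      by (rule in_shuffles_iff_filter) (use y z in auto)
    ultimately show ?thesis using True outer by auto
  qed (use outer in auto)
qed

lemma card_nested_shuffles_assoc:
  assumes "\<forall>x\<in>set xs. P1 x \<and> P2 x" "\<forall>y\<in>set ys. \<not> P1 y \<and> P2 y"
    "\<forall>z\<in>set zs. \<not> P1 z \<and> \<not> P2 z"
  shows "card {us \<in> shuffles xs ys. ws \<in> shuffles us zs} = card {vs \<in> shuffles ys zs. ws \<in> shuffles xs vs}"
  unfolding nested_shuffles_left[OF assms] nested_shuffles_right[OF assms] by simp

lemma append_less_append_left: "(ys::'a::linorder list) < zs \<Longrightarrow> xs @ ys < xs @ zs"
  by (induction xs) auto

lemma append_le_append_left: "(ys::'a::linorder list) \<le> zs \<Longrightarrow> xs @ ys \<le> xs @ zs"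
  by (induction xs) auto

lemma map_less_map_strict_mono:
  fixes f :: "'a::linorder \<Rightarrow> 'b::linorder"
  assumes "strict_mono f"
  shows "xs < ys \<Longrightarrow> map f xs < map f ys"
proof (induction xs arbitrary: ys)
  case Nil then show ?case by (cases ys) auto
next
  case (Cons x xs)
  then obtain y ys' where ys: "ys = y # ys'" by (cases ys) auto
  from Cons.prems ys have "x < y \<or> x = y \<and> xs < ys'" by auto
  then show ?case using Cons.IH assms ys by (auto dest: strict_monoD)
qed

lemma map_le_map_strict_mono:
  fixes f :: "'a::linorder \<Rightarrow> 'b::linorder"
  assumes "strict_mono f"
  shows "xs \<le> ys \<Longrightarrow> map f xs \<le> map f ys"
  using map_less_map_strict_mono[OF assms, of xs ys] by (auto simp: order_le_less)

lemma shuffle_le_append: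
  fixes xs ys :: "'a::linorder list"
  assumes "\<forall>x\<in>set xs. \<forall>y\<in>set ys. y < x" "zs \<in> shuffles xs ys"
  shows "zs \<le> xs @ ys"
  using assms
proof (induction xs ys arbitrary: zs rule: shuffles.induct)
  case (3 x xs y ys)
  from "3.prems"(2) consider (left) zs' where "zs = x # zs'" "zs' \<in> shuffles xs (y # ys)"
    | (right) zs' where "zs = y # zs'" by auto
  then show ?case
  proof cases
    case left
    then show ?thesis using "3.IH"(1) "3.prems"(1) by auto
  next
    case right
    have "y < x" using "3.prems"(1) by auto
    then show ?thesis using right by simp
  qed
qed auto

section \<open>Packed matrices and row shuffles\<close>

definition nonzero_row :: "nat list \<Rightarrow> bool" where
  "nonzero_row r \<longleftrightarrow> (\<exists>x\<in>set r. x \<noteq> 0)"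

definition packed_of_size :: "nat \<Rightarrow> nat \<Rightarrow> mat set" where
  "packed_of_size k n = {M. packed k M \<and> length M = n}"

lemma nonzero_row_append [simp]: "nonzero_row (u @ v) \<longleftrightarrow> nonzero_row u \<or> nonzero_row v"
  by (auto simp: nonzero_row_def)

lemma nonzero_row_replicate [simp]: "\<not> nonzero_row (replicate n 0)"
  by (auto simp: nonzero_row_def)

lemma nonzero_row_iff_nth: "nonzero_row u \<longleftrightarrow> (\<exists>j<length u. u ! j \<noteq> 0)"
  unfolding nonzero_row_def by (metis in_set_conv_nth)

lemma not_nonzero_row_eq_replicate: "\<not> nonzero_row u \<Longrightarrow> u = replicate (length u) 0"
  by (auto simp: nonzero_row_def intro: replicate_eqI)

lemma replicate_zero_append_less:
  "nonzero_row u \<Longrightarrow> replicate (length u) 0 @ w < u @ v"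
proof (induction u)
  case (Cons x u)
  then show ?case by (cases "x = 0") (auto simp: nonzero_row_def)
qed (simp add: nonzero_row_def)

lemma length_pad_right [simp]: "length (pad_right M n) = length M"
  by (simp add: pad_right_def)

lemma length_pad_left [simp]: "length (pad_left n M) = length M"
  by (simp add: pad_left_def)

lemma set_pad_right: "set (pad_right M n) = (\<lambda>r. r @ replicate n 0) ` set M"
  by (simp add: pad_right_def)

lemma set_pad_left: "set (pad_left n M) = (\<lambda>r. replicate n 0 @ r) ` set M"
  by (simp add: pad_left_def)

lemma pad_right_0 [simp]: "pad_right A 0 = A"
  by (simp add: pad_right_def)

lemma pad_left_0 [simp]: "pad_left 0 B = B"
  by (simp add: pad_left_def)

lemma pad_left_inject: "pad_left n B = pad_left n C \<longleftrightarrow> B = C"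
  by (simp add: pad_left_def inj_map_eq_map inj_def)

lemma length_ov [simp]: "length (ov A B) = length A + length B"
  by (simp add: ov_def)

lemma ov_Nil_right [simp]: "ov A [] = A"
  by (simp add: ov_def pad_right_def pad_left_def)

lemma ov_Nil_left [simp]: "ov [] B = B"
  by (simp add: ov_def pad_right_def pad_left_def)

lemma ov_assoc: "ov (ov A B) C = ov A (ov B C)"
  by (simp add: ov_def pad_right_def pad_left_def replicate_add)

lemma ov_eq_Nil_iff [simp]: "ov A B = [] \<longleftrightarrow> A = [] \<and> B = []"
  by (simp add: ov_def pad_right_def pad_left_def)

lemma ov_in_row_shuffles: "ov A B \<in> row_shuffles A B"
  by (simp add: ov_def row_shuffles_def append_in_shuffles)

lemma row_shuffles_Nil_left [simp]: "row_shuffles [] B = {B}"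
  by (simp add: row_shuffles_def pad_right_def)

lemma row_shuffles_Nil_right [simp]: "row_shuffles A [] = {A}"
  by (simp add: row_shuffles_def pad_left_def)

lemma finite_row_shuffles [simp]: "finite (row_shuffles A B)"
  by (simp add: row_shuffles_def)

lemma length_row_shuffles: "N \<in> row_shuffles A B \<Longrightarrow> length N = length A + length B"
  by (simp add: row_shuffles_def length_shuffles)

lemma set_row_shuffles:
  "N \<in> row_shuffles A B \<Longrightarrow>
     set N = (\<lambda>r. r @ replicate (length B) 0) ` set A \<union> (\<lambda>r. replicate (length A) 0 @ r) ` set B"
  by (simp add: row_shuffles_def set_shuffles set_pad_right set_pad_left)

lemma packed_Nil [simp]: "packed k []"
  by (simp add: packed_def is_square_def)

lemma packedD:
  assumes "packed k M"
  shows "\<And>r. r \<in> set M \<Longrightarrow> length r = length M"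
    "\<And>r x. r \<in> set M \<Longrightarrow> x \<in> set r \<Longrightarrow> x \<le> k"
    "\<And>r. r \<in> set M \<Longrightarrow> nonzero_row r"
    "\<And>j. j < length M \<Longrightarrow> \<exists>r\<in>set M. r ! j \<noteq> 0"
  using assms by (auto simp: packed_def is_square_def nonzero_row_def)

lemma packedI:
  assumes "\<And>r. r \<in> set M \<Longrightarrow> length r = length M"
    "\<And>r x. r \<in> set M \<Longrightarrow> x \<in> set r \<Longrightarrow> x \<le> k"
    "\<And>r. r \<in> set M \<Longrightarrow> nonzero_row r"
    "\<And>j. j < length M \<Longrightarrow> \<exists>r\<in>set M. r ! j \<noteq> 0"
  shows "packed k M"
  using assms by (auto simp: packed_def is_square_def nonzero_row_def)

lemma finite_packed_of_size: "finite (packed_of_size k n)"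
proof -
  let ?R = "{r. set r \<subseteq> {0..k} \<and> length r = n}"
  have "finite ?R" by (rule finite_lists_length_eq) simp
  then have "finite {M. set M \<subseteq> ?R \<and> length M = n}" by (rule finite_lists_length_eq)
  moreover have "packed_of_size k n \<subseteq> {M. set M \<subseteq> ?R \<and> length M = n}"
    by (auto simp: packed_of_size_def packed_def is_square_def)
  ultimately show ?thesis by (rule finite_subset[rotated])
qed

lemma packed_row_shuffle:
  assumes A: "packed k A" and B: "packed k B" and N: "N \<in> row_shuffles A B"
  shows "packed k N"
proof -
  note sN = set_row_shuffles[OF N] and lN = length_row_shuffles[OF N]
  show ?thesis
  proof (rule packedI)
    fix r assume "r \<in> set N"
    then show "length r = length N" "nonzero_row r" "\<And>x. x \<in> set r \<Longrightarrow> x \<le> k"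
      using sN lN packedD[OF A] packedD[OF B] by auto
  next
    fix j assume j: "j < length N"
    show "\<exists>r\<in>set N. r ! j \<noteq> 0"
    proof (cases "j < length A")
      case True
      then obtain r where r: "r \<in> set A" "r ! j \<noteq> 0" using packedD(4)[OF A] by blast
      then have "(r @ replicate (length B) 0) ! j \<noteq> 0"
        using True packedD(1)[OF A r(1)] by (simp add: nth_append)
      then show ?thesis using r sN by auto
    next
      case False
      then obtain r where r: "r \<in> set B" "r ! (j - length A) \<noteq> 0"
        using packedD(4)[OF B] j lN by (metis add_diff_inverse_nat add_less_cancel_left)
      then have "(replicate (length A) 0 @ r) ! j \<noteq> 0" using False by (simp add: nth_append)
      then show ?thesis using r sN by auto
    qed
  qed
qed

lemma packed_left_of_row_shuffle:
  assumes N: "packed k N" "N \<in> row_shuffles A B"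
  shows "packed k A"
proof -
  note sN = set_row_shuffles[OF N(2)] and lN = length_row_shuffles[OF N(2)]
  have row: "r @ replicate (length B) 0 \<in> set N" if "r \<in> set A" for r
    using that sN by blast
  have len: "length r = length A" if "r \<in> set A" for r
    using packedD(1)[OF N(1) row[OF that]] lN by simp
  show ?thesis
  proof (rule packedI)
    fix r assume r: "r \<in> set A"
    show "length r = length A" using len[OF r] .
    show "nonzero_row r" using packedD(3)[OF N(1) row[OF r]] by simp
    show "\<And>x. x \<in> set r \<Longrightarrow> x \<le> k" using packedD(2)[OF N(1) row[OF r]] by simp
  next
    fix j assume j: "j < length A"
    then have "j < length N" using lN by simp
    then obtain \<rho> where \<rho>: "\<rho> \<in> set N" "\<rho> ! j \<noteq> 0" using packedD(4)[OF N(1)] by blast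
    then obtain r where "r \<in> set A" "\<rho> = r @ replicate (length B) 0"
      using sN j by (auto simp: nth_append)
    then show "\<exists>r\<in>set A. r ! j \<noteq> 0" using \<rho>(2) j len by (auto simp: nth_append)
  qed
qed

lemma packed_right_of_row_shuffle:
  assumes N: "packed k N" "N \<in> row_shuffles A B"
  shows "packed k B"
proof -
  note sN = set_row_shuffles[OF N(2)] and lN = length_row_shuffles[OF N(2)]
  have row: "replicate (length A) 0 @ r \<in> set N" if "r \<in> set B" for r
    using that sN by blast
  have len: "length r = length B" if "r \<in> set B" for r
    using packedD(1)[OF N(1) row[OF that]] lN by simp
  have len_A: "length r = length A" if "r \<in> set A" for r
    using packedD(1)[OF N(1)] that sN lN by fastforce
  show ?thesis
  proof (rule packedI)
    fix r assume r: "r \<in> set B"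
    show "length r = length B" using len[OF r] .
    show "nonzero_row r" using packedD(3)[OF N(1) row[OF r]] by simp
    show "\<And>x. x \<in> set r \<Longrightarrow> x \<le> k" using packedD(2)[OF N(1) row[OF r]] by simp
  next
    fix j assume j: "j < length B"
    then have "length A + j < length N" using lN by simp
    then obtain \<rho> where \<rho>: "\<rho> \<in> set N" "\<rho> ! (length A + j) \<noteq> 0"
      using packedD(4)[OF N(1)] by blast
    then obtain r where "r \<in> set B" "\<rho> = replicate (length A) 0 @ r"
      using sN len_A j by (auto simp: nth_append)
    then show "\<exists>r\<in>set B. r ! j \<noteq> 0" using \<rho>(2) by (auto simp: nth_append)
  qed
qed

lemma packed_ov: "packed k A \<Longrightarrow> packed k B \<Longrightarrow> packed k (ov A B)"
  using packed_row_shuffle ov_in_row_shuffles by blast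

lemma in_row_shuffles_iff_filter:
  assumes "\<forall>r\<in>set A. length r = length A \<and> nonzero_row r"
  shows "N \<in> row_shuffles A B \<longleftrightarrow>
    filter (\<lambda>r. nonzero_row (take (length A) r)) N = pad_right A (length B) \<and>
    filter (\<lambda>r. \<not> nonzero_row (take (length A) r)) N = pad_left (length A) B"
  unfolding row_shuffles_def
  by (rule in_shuffles_iff_filter) (use assms in \<open>auto simp: set_pad_right set_pad_left\<close>)

lemma ov_in_row_shuffles_iff:
  assumes "packed k A"
  shows "ov A R \<in> row_shuffles A B \<longleftrightarrow> B = R"
proof
  have rows: "\<forall>r\<in>set A. length r = length A \<and> nonzero_row r"
    using packedD(1,3)[OF assms] by blast
  then have "filter (\<lambda>r. \<not> nonzero_row (take (length A) r)) (ov A R) = pad_left (length A) R"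
    by (auto simp: ov_def pad_right_def pad_left_def filter_empty_conv intro!: filter_True)
  moreover assume "ov A R \<in> row_shuffles A B"
  ultimately show "B = R" using in_row_shuffles_iff_filter[OF rows] pad_left_inject by metis
qed (simp add: ov_in_row_shuffles)

section \<open>Factorization into connected matrices\<close>

definition splits_at :: "mat \<Rightarrow> nat \<Rightarrow> bool" where
  "splits_at M s \<longleftrightarrow> (\<forall>i<length M. \<forall>j<length M. M ! i ! j \<noteq> 0 \<longrightarrow> (i < s \<longleftrightarrow> j < s))"

lemma nth_ov_upper: "i < length A \<Longrightarrow> ov A R ! i = A ! i @ replicate (length R) 0"
  by (simp add: ov_def pad_right_def nth_append)

lemma nth_ov_lower:
  "length A \<le> i \<Longrightarrow> i < length A + length R \<Longrightarrow> ov A R ! i = replicate (length A) 0 @ R ! (i - length A)"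
  by (simp add: ov_def pad_left_def nth_append)

lemma splits_at_ov:
  assumes "packed k A"
  shows "splits_at (ov A R) (length A)"
  unfolding splits_at_def
proof (intro allI impI)
  fix i j assume i: "i < length (ov A R)" and j: "j < length (ov A R)" and nz: "ov A R ! i ! j \<noteq> 0"
  show "i < length A \<longleftrightarrow> j < length A"
  proof (cases "i < length A")
    case True
    then have "length (A ! i) = length A" using packedD(1)[OF assms] by simp
    then show ?thesis using nz j True nth_ov_upper[OF True, of R] by (auto simp: nth_append split: if_splits)
  next
    case False
    then show ?thesis using nz i nth_ov_lower[of A i R] by (auto simp: nth_append)
  qed
qed

lemma ov_blocks_if_splits_at:
  assumes M: "packed k M" and sp: "splits_at M s" and s: "s \<le> length M"
  shows "M = ov (map (take s) (take s M)) (map (drop s) (drop s M))" (is "M = ov ?A ?R")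
proof (rule nth_equalityI)
  show "length M = length (ov ?A ?R)" using s by simp
next
  fix i assume i: "i < length M"
  have len: "length (M ! i) = length M" using packedD(1)[OF M] i by simp
  have zero: "M ! i ! j = 0" if "j < length M" "i < s \<longleftrightarrow> \<not> j < s" for j
    using sp i that unfolding splits_at_def by blast
  show "M ! i = ov ?A ?R ! i"
  proof (cases "i < s")
    case True
    have "drop s (M ! i) = replicate (length M - s) 0"
      using zero True len by (intro nth_equalityI) auto
    then have "M ! i = take s (M ! i) @ replicate (length M - s) 0" by (metis append_take_drop_id)
    then show ?thesis using nth_ov_upper[of i ?A ?R] True s by simp
  next
    case False
    have "take s (M ! i) = replicate s 0"
      using zero False len s by (intro nth_equalityI) auto
    then have "M ! i = replicate s 0 @ drop s (M ! i)" by (metis append_take_drop_id)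
    then show ?thesis using nth_ov_lower[of ?A i ?R] False i s by simp
  qed
qed

lemma ov_decomposition_if_splits_at:
  assumes "packed k M" "splits_at M s" "s \<le> length M"
  obtains A R where "packed k A" "packed k R" "length A = s" "M = ov A R"
proof -
  let ?A = "map (take s) (take s M)" and ?R = "map (drop s) (drop s M)"
  have M: "M = ov ?A ?R" by (rule ov_blocks_if_splits_at[OF assms])
  then have "M \<in> row_shuffles ?A ?R" using ov_in_row_shuffles by metis
  moreover have "length ?A = s" using assms(3) by simp
  ultimately show ?thesis
    using that packed_left_of_row_shuffle packed_right_of_row_shuffle assms(1) M by blast
qed

lemma connected_packed: "connected k M \<Longrightarrow> packed k M"
  by (simp add: connected_def)

lemma connected_nonempty: "connected k M \<Longrightarrow> M \<noteq> []"
  by (simp add: connected_def)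

lemma not_splits_at_ov_connected:
  assumes A: "connected k A" and s: "0 < s" "s < length A"
  shows "\<not> splits_at (ov A R) s"
proof
  assume sp: "splits_at (ov A R) s"
  have pA: "packed k A" using A by (rule connected_packed)
  have "splits_at A s"
    unfolding splits_at_def
  proof (intro allI impI)
    fix i j assume i: "i < length A" and j: "j < length A" and nz: "A ! i ! j \<noteq> 0"
    have "ov A R ! i ! j = A ! i ! j"
      using nth_ov_upper[OF i] packedD(1)[OF pA] i j by (simp add: nth_append)
    then show "i < s \<longleftrightarrow> j < s" using sp i j nz unfolding splits_at_def by auto
  qed
  then obtain A' R' where d: "packed k A'" "packed k R'" "length A' = s" "A = ov A' R'"
    using ov_decomposition_if_splits_at[OF pA] s by (metis less_imp_le)
  then have "A' = A \<or> R' = A" using A unfolding connected_def by blast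
  moreover have "length A = length A' + length R'" using d(4) by simp
  ultimately show False using d(3) s by auto
qed

lemma ov_blocks:
  assumes "packed k A"
  shows "map (take (length A)) (take (length A) (ov A R)) = A"
    "map (drop (length A)) (drop (length A) (ov A R)) = R"
  using packedD(1)[OF assms] by (simp_all add: ov_def pad_right_def pad_left_def map_idI o_def)

lemma ov_connected_inject:
  assumes A1: "connected k A1" and A2: "connected k A2" and eq: "ov A1 R1 = ov A2 R2"
  shows "A1 = A2 \<and> R1 = R2"
proof -
  have not_shorter: "\<not> length B1 < length B2"
    if B1: "connected k B1" and B2: "connected k B2" and eq': "ov B1 S1 = ov B2 S2" for B1 B2 S1 S2
  proof
    assume "length B1 < length B2"
    moreover have "splits_at (ov B2 S2) (length B1)"
      using splits_at_ov[OF connected_packed[OF B1]] eq' by metis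
    ultimately show False
      using not_splits_at_ov_connected[OF B2] connected_nonempty[OF B1] by blast
  qed
  have len: "length A1 = length A2"
    using not_shorter[OF A1 A2 eq] not_shorter[OF A2 A1 eq[symmetric]] by simp
  note blocks1 = ov_blocks[OF connected_packed[OF A1], of R1, unfolded eq len]
  show ?thesis
    using ov_blocks[OF connected_packed[OF A2], of R2] blocks1 by simp
qed

lemma foldr_ov_eq_ov: "foldr ov Ms B = ov (foldr ov Ms []) B"
  by (induction Ms) (auto simp: ov_assoc)

lemma foldr_ov_append: "foldr ov (Ms @ Ns) [] = ov (foldr ov Ms []) (foldr ov Ns [])"
  using foldr_ov_eq_ov[of Ms "foldr ov Ns []"] by simp

lemma packed_foldr_ov: "\<forall>X\<in>set Ms. packed k X \<Longrightarrow> packed k (foldr ov Ms [])"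
  by (induction Ms) (auto intro: packed_ov)

lemma foldr_ov_eq_Nil_iff: "\<forall>X\<in>set Ms. connected k X \<Longrightarrow> foldr ov Ms [] = [] \<longleftrightarrow> Ms = []"
  by (induction Ms) (auto dest: connected_nonempty)

lemma connected_factorization_exists:
  "packed k M \<Longrightarrow> \<exists>Ms. (\<forall>X\<in>set Ms. connected k X) \<and> foldr ov Ms [] = M"
proof (induction "length M" arbitrary: M rule: less_induct)
  case less
  show ?case
  proof (cases "M = [] \<or> connected k M")
    case True
    then show ?thesis
    proof
      assume "M = []"
      then show ?thesis by (intro exI[of _ "[]"]) simp
    next
      assume "connected k M"
      then show ?thesis by (intro exI[of _ "[M]"]) simp
    qed
  next
    case False
    then obtain M1 M2 where M: "packed k M1" "packed k M2" "M = ov M1 M2" "M1 \<noteq> M" "M2 \<noteq> M"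
      using less.prems unfolding connected_def by blast
    then have "M1 \<noteq> []" "M2 \<noteq> []" by auto
    then have "length M1 < length M" "length M2 < length M" using M(3) by auto
    then obtain Ms1 Ms2 where "\<forall>X\<in>set Ms1. connected k X" "foldr ov Ms1 [] = M1"
      "\<forall>X\<in>set Ms2. connected k X" "foldr ov Ms2 [] = M2"
      using less.hyps M(1,2) by meson
    then show ?thesis using M(3) foldr_ov_append[of Ms1 Ms2] by (intro exI[of _ "Ms1 @ Ms2"]) auto
  qed
qed

lemma connected_factorization_unique:
  "\<forall>X\<in>set Ms. connected k X \<Longrightarrow> \<forall>X\<in>set Ns. connected k X \<Longrightarrow>
   foldr ov Ms [] = foldr ov Ns [] \<Longrightarrow> Ms = Ns"
proof (induction Ms arbitrary: Ns)
  case Nil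
  then show ?case using foldr_ov_eq_Nil_iff by metis
next
  case (Cons A Ms)
  then obtain B Ns' where Ns: "Ns = B # Ns'"
    using foldr_ov_eq_Nil_iff by (metis list.distinct(1) neq_Nil_conv)
  then have "A = B \<and> foldr ov Ms [] = foldr ov Ns' []"
    using ov_connected_inject[of k A B] Cons.prems by auto
  then show ?case using Cons.IH[of Ns'] Cons.prems Ns by auto
qed

lemma factorization_factors:
  assumes "packed k M"
  shows "\<forall>X\<in>set (factors k M). connected k X" "foldr ov (factors k M) [] = M"
  using someI_ex[OF connected_factorization_exists[OF assms]] unfolding factors_def by auto

lemma factors_foldr_ov: "\<forall>X\<in>set Ms. connected k X \<Longrightarrow> factors k (foldr ov Ms []) = Ms"
  using connected_factorization_unique factorization_factors packed_foldr_ov connected_packed by metis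

lemma factors_Nil [simp]: "factors k [] = []"
  using factors_foldr_ov[of "[]" k] by simp

lemma factors_ov: "connected k A \<Longrightarrow> packed k N \<Longrightarrow> factors k (ov A N) = A # factors k N"
  using factors_foldr_ov[of "A # factors k N" k] factorization_factors[of k N] by simp

section \<open>Associativity of the row shuffle product\<close>

lemma image_Collect_conj_eq: "(\<And>x. x \<in> S \<Longrightarrow> P x \<longleftrightarrow> Q (f x)) \<Longrightarrow> f ` {x \<in> S. P x} = {y \<in> f ` S. Q y}"
  by auto

lemma image_map_nested_row_shuffles_left:
  "map (\<lambda>r. r @ replicate (length C) 0) ` {X \<in> row_shuffles A B. N \<in> row_shuffles X C} =
   {us \<in> shuffles (pad_right A (length B + length C))
                   (map (\<lambda>r. replicate (length A) 0 @ r @ replicate (length C) 0) B).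
      N \<in> shuffles us (pad_left (length A + length B) C)}"
proof -
  let ?f = "\<lambda>r. r @ replicate (length C) 0"
  have "map ?f (pad_right A (length B)) = pad_right A (length B + length C)"
    "map ?f (pad_left (length A) B) = map (\<lambda>r. replicate (length A) 0 @ r @ replicate (length C) 0) B"
    by (simp_all add: pad_right_def pad_left_def replicate_add)
  then have image: "map ?f ` row_shuffles A B = shuffles (pad_right A (length B + length C))
      (map (\<lambda>r. replicate (length A) 0 @ r @ replicate (length C) 0) B)"
    by (simp add: row_shuffles_def map_shuffles)
  have "N \<in> row_shuffles X C \<longleftrightarrow> N \<in> shuffles (map ?f X) (pad_left (length A + length B) C)"
    if "X \<in> row_shuffles A B" for X
    using length_row_shuffles[OF that] by (simp add: row_shuffles_def pad_right_def)
  then show ?thesis unfolding image[symmetric] by (rule image_Collect_conj_eq)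
qed

lemma image_map_nested_row_shuffles_right:
  "map (\<lambda>r. replicate (length A) 0 @ r) ` {Y \<in> row_shuffles B C. N \<in> row_shuffles A Y} =
   {vs \<in> shuffles (map (\<lambda>r. replicate (length A) 0 @ r @ replicate (length C) 0) B)
                   (pad_left (length A + length B) C).
      N \<in> shuffles (pad_right A (length B + length C)) vs}"
proof -
  let ?g = "\<lambda>r. replicate (length A) 0 @ r"
  have "map ?g (pad_right B (length C)) = map (\<lambda>r. replicate (length A) 0 @ r @ replicate (length C) 0) B"
    "map ?g (pad_left (length B) C) = pad_left (length A + length B) C"
    by (simp_all add: pad_right_def pad_left_def replicate_add)
  then have image: "map ?g ` row_shuffles B C = shuffles
      (map (\<lambda>r. replicate (length A) 0 @ r @ replicate (length C) 0) B) (pad_left (length A + length B) C)"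
    by (simp add: row_shuffles_def map_shuffles)
  have "N \<in> row_shuffles A Y \<longleftrightarrow> N \<in> shuffles (pad_right A (length B + length C)) (map ?g Y)"
    if "Y \<in> row_shuffles B C" for Y
    using length_row_shuffles[OF that] by (simp add: row_shuffles_def pad_left_def)
  then show ?thesis unfolding image[symmetric] by (rule image_Collect_conj_eq)
qed

lemma card_nested_row_shuffles_assoc:
  assumes A: "packed k A" and B: "packed k B"
  shows "card {X \<in> row_shuffles A B. N \<in> row_shuffles X C} = card {Y \<in> row_shuffles B C. N \<in> row_shuffles A Y}"
proof -
  let ?a = "length A" and ?b = "length B"
  let ?P1 = "\<lambda>r. nonzero_row (take ?a r)" and ?P2 = "\<lambda>r. nonzero_row (take (?a + ?b) r)"
  have card_map: "card (map f ` S) = card S" if "inj f" for f :: "nat list \<Rightarrow> nat list" and S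
    using card_image[OF inj_on_subset[OF inj_mapI[OF that] subset_UNIV]] .
  have "card {X \<in> row_shuffles A B. N \<in> row_shuffles X C}
      = card (map (\<lambda>r. r @ replicate (length C) 0) ` {X \<in> row_shuffles A B. N \<in> row_shuffles X C})"
    by (rule card_map[symmetric]) (simp add: inj_def)
  also have "\<dots> = card {vs \<in> shuffles (map (\<lambda>r. replicate ?a 0 @ r @ replicate (length C) 0) B)
                   (pad_left (?a + ?b) C). N \<in> shuffles (pad_right A (?b + length C)) vs}"
    unfolding image_map_nested_row_shuffles_left
  proof (rule card_nested_shuffles_assoc)
    show "\<forall>x\<in>set (pad_right A (?b + length C)). ?P1 x \<and> ?P2 x"
    proof
      fix x assume "x \<in> set (pad_right A (?b + length C))"
      then obtain r where r: "r \<in> set A" "x = r @ replicate (?b + length C) 0"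
        by (auto simp: set_pad_right)
      then show "?P1 x \<and> ?P2 x" using packedD(1,3)[OF A r(1)] by simp
    qed
    show "\<forall>y\<in>set (map (\<lambda>r. replicate ?a 0 @ r @ replicate (length C) 0) B). \<not> ?P1 y \<and> ?P2 y"
      using packedD(1,3)[OF B] by auto
    show "\<forall>z\<in>set (pad_left (?a + ?b) C). \<not> ?P1 z \<and> \<not> ?P2 z"
      by (auto simp: set_pad_left)
  qed
  also have "\<dots> = card (map (\<lambda>r. replicate ?a 0 @ r) ` {Y \<in> row_shuffles B C. N \<in> row_shuffles A Y})"
    unfolding image_map_nested_row_shuffles_right ..
  also have "\<dots> = card {Y \<in> row_shuffles B C. N \<in> row_shuffles A Y}"
    by (rule card_map) (simp add: inj_def)
  finally show ?thesis .
qed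

definition supp :: "(mat \<Rightarrow> 'a::zero) \<Rightarrow> mat set" where
  "supp x = {M. x M \<noteq> 0}"

definition shuffle_elt :: "mat \<Rightarrow> mat \<Rightarrow> mat \<Rightarrow> 'a::field" where
  "shuffle_elt A B N = of_bool (N \<in> row_shuffles A B)"

lemma supp_iff: "M \<in> supp x \<longleftrightarrow> x M \<noteq> 0"
  by (simp add: supp_def)

lemma supp_basis_elt [simp]: "supp (basis_elt A :: mat \<Rightarrow> 'a::field) = {A}"
  by (auto simp: supp_def basis_elt_def)

lemma sum_supp_superset:
  fixes a :: "mat \<Rightarrow> 'a::field"
  shows "finite S \<Longrightarrow> supp a \<subseteq> S \<Longrightarrow> (\<Sum>A\<in>supp a. a A * f A) = (\<Sum>A\<in>S. a A * f A)"
  by (rule sum.mono_neutral_left) (auto simp: supp_def)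

lemma sum_nonzeroE: "sum g S \<noteq> 0 \<Longrightarrow> (\<And>x. x \<in> S \<Longrightarrow> g x \<noteq> 0 \<Longrightarrow> P) \<Longrightarrow> P"
  by (meson sum.neutral)

lemma dprod_eq_sum:
  "dprod a b N = (\<Sum>A\<in>supp a. \<Sum>B\<in>supp b. a A * b B * shuffle_elt A B N)"
proof -
  have "{p. a (fst p) \<noteq> 0 \<and> b (snd p) \<noteq> 0} = supp a \<times> supp b"
    by (auto simp: supp_def)
  then show ?thesis
    unfolding dprod_def by (simp add: sum.cartesian_product shuffle_elt_def of_bool_def case_prod_beta)
qed

lemma dprod_basis_elt_left: "dprod (basis_elt A) y N = (\<Sum>B\<in>supp y. y B * shuffle_elt A B N)"
  unfolding dprod_eq_sum supp_basis_elt by (simp add: basis_elt_def)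

lemma dprod_basis_elt_right: "dprod x (basis_elt B) N = (\<Sum>A\<in>supp x. x A * shuffle_elt A B N)"
  unfolding dprod_eq_sum supp_basis_elt by (simp add: basis_elt_def)

lemma supp_dprod: "supp (dprod a b) \<subseteq> (\<Union>A\<in>supp a. \<Union>B\<in>supp b. row_shuffles A B)"
proof
  fix N assume "N \<in> supp (dprod a b)"
  then have "dprod a b N \<noteq> 0" by (simp add: supp_iff)
  then obtain A where A: "A \<in> supp a" "(\<Sum>B\<in>supp b. a A * b B * shuffle_elt A B N) \<noteq> 0"
    unfolding dprod_eq_sum by (rule sum_nonzeroE)
  then obtain B where "B \<in> supp b" "a A * b B * shuffle_elt A B N \<noteq> 0"
    by (elim sum_nonzeroE)
  then show "N \<in> (\<Union>A\<in>supp a. \<Union>B\<in>supp b. row_shuffles A B)"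
    using A(1) by (auto simp: shuffle_elt_def split: if_splits)
qed

lemma finite_supp_dprod: "finite (supp a) \<Longrightarrow> finite (supp b) \<Longrightarrow> finite (supp (dprod a b))"
  by (rule finite_subset[OF supp_dprod]) auto

lemma supp_dprod_packed_of_size:
  "supp a \<subseteq> packed_of_size k m \<Longrightarrow> supp b \<subseteq> packed_of_size k n \<Longrightarrow>
   supp (dprod a b) \<subseteq> packed_of_size k (m + n)"
proof
  fix N assume "N \<in> supp (dprod a b)" and a: "supp a \<subseteq> packed_of_size k m" and b: "supp b \<subseteq> packed_of_size k n"
  then obtain A B where "A \<in> supp a" "B \<in> supp b" "N \<in> row_shuffles A B"
    using supp_dprod by blast
  then show "N \<in> packed_of_size k (m + n)"
    using a b packed_row_shuffle length_row_shuffles by (fastforce simp: packed_of_size_def)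
qed

lemma dprod_assoc_basis_elt:
  assumes A: "packed k A" and y: "finite (supp y)" "\<forall>C\<in>supp y. packed k C"
  shows "dprod (dprod (basis_elt A) y) (basis_elt B) = dprod (basis_elt A) (dprod y (basis_elt B))"
proof
  fix N
  define F where "F = (\<Union>C\<in>supp y. row_shuffles A C)"
  define G where "G = (\<Union>C\<in>supp y. row_shuffles C B)"
  have fin: "finite F" "finite G" using y by (auto simp: F_def G_def)
  have count_left: "(\<Sum>X\<in>F. shuffle_elt A C X * shuffle_elt X B N) =
      (of_nat (card {X \<in> row_shuffles A C. N \<in> row_shuffles X B}) :: 'a)" if "C \<in> supp y" for C
  proof -
    have "F \<inter> row_shuffles A C \<inter> {X. N \<in> row_shuffles X B} = {X \<in> row_shuffles A C. N \<in> row_shuffles X B}"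
      using that by (auto simp: F_def)
    then show ?thesis using fin(1) by (simp add: shuffle_elt_def)
  qed
  have count_right: "(\<Sum>Z\<in>G. shuffle_elt C B Z * shuffle_elt A Z N) =
      (of_nat (card {Z \<in> row_shuffles C B. N \<in> row_shuffles A Z}) :: 'a)" if "C \<in> supp y" for C
  proof -
    have "G \<inter> row_shuffles C B \<inter> {Z. N \<in> row_shuffles A Z} = {Z \<in> row_shuffles C B. N \<in> row_shuffles A Z}"
      using that by (auto simp: G_def)
    then show ?thesis using fin(2) by (simp add: shuffle_elt_def)
  qed
  have "dprod (dprod (basis_elt A) y) (basis_elt B) N = (\<Sum>X\<in>F. dprod (basis_elt A) y X * shuffle_elt X B N)"
    unfolding dprod_basis_elt_right
    by (rule sum_supp_superset[OF fin(1)]) (use supp_dprod[of "basis_elt A" y] in \<open>simp add: F_def\<close>)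
  also have "\<dots> = (\<Sum>C\<in>supp y. y C * (\<Sum>X\<in>F. shuffle_elt A C X * shuffle_elt X B N))"
    unfolding dprod_basis_elt_left sum_distrib_right sum_distrib_left
    by (subst sum.swap) (simp add: mult.assoc)
  also have "\<dots> = (\<Sum>C\<in>supp y. y C * of_nat (card {X \<in> row_shuffles A C. N \<in> row_shuffles X B}))"
    using count_left by simp
  also have "\<dots> = (\<Sum>C\<in>supp y. y C * of_nat (card {Z \<in> row_shuffles C B. N \<in> row_shuffles A Z}))"
    using card_nested_row_shuffles_assoc[OF A] y(2) by simp
  also have "\<dots> = (\<Sum>C\<in>supp y. y C * (\<Sum>Z\<in>G. shuffle_elt C B Z * shuffle_elt A Z N))"
    using count_right by simp
  also have "\<dots> = (\<Sum>Z\<in>G. dprod y (basis_elt B) Z * shuffle_elt A Z N)"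
    unfolding dprod_basis_elt_right sum_distrib_right sum_distrib_left
    by (subst sum.swap) (simp add: mult.assoc)
  also have "\<dots> = dprod (basis_elt A) (dprod y (basis_elt B)) N"
    unfolding dprod_basis_elt_left
    by (rule sum_supp_superset[OF fin(2), symmetric]) (use supp_dprod[of y "basis_elt B"] in \<open>simp add: G_def\<close>)
  finally show "dprod (dprod (basis_elt A) y) (basis_elt B) N = dprod (basis_elt A) (dprod y (basis_elt B)) N" .
qed

section \<open>Unitriangularity of W\<close>

definition dprod_list :: "mat list \<Rightarrow> mat \<Rightarrow> 'a::field" where
  "dprod_list Ms = foldr dprod (map basis_elt Ms) unit_elt"

lemma dprod_list_Nil: "dprod_list [] = basis_elt []"
  by (simp add: dprod_list_def unit_elt_def)

lemma dprod_list_Cons: "dprod_list (A # Ms) = dprod (basis_elt A) (dprod_list Ms)"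
  by (simp add: dprod_list_def)

lemma W_eq_dprod_list: "W k M = dprod_list (factors k M)"
  by (simp add: W_def dprod_list_def)

lemma pad_left_less_pad_right:
  assumes "packed k A" "x \<in> set (pad_right A m)" "y \<in> set (pad_left (length A) B)"
  shows "y < x"
proof -
  obtain u where u: "u \<in> set A" "x = u @ replicate m 0" using assms(2) by (auto simp: set_pad_right)
  obtain w where "y = replicate (length A) 0 @ w" using assms(3) by (auto simp: set_pad_left)
  then show "y < x" using replicate_zero_append_less packedD(1,3)[OF assms(1) u(1)] u(2) by metis
qed

lemma row_shuffle_le_ov:
  assumes A: "packed k A" and N: "N \<in> row_shuffles A B" and BR: "B \<le> R" "length B = length R"
  shows "N \<le> ov A R"
proof -
  have "N \<le> pad_right A (length B) @ pad_left (length A) B"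
    using shuffle_le_append pad_left_less_pad_right[OF A] N unfolding row_shuffles_def by blast
  also have "pad_left (length A) B \<le> pad_left (length A) R"
    unfolding pad_left_def
    by (rule map_le_map_strict_mono[OF _ BR(1)]) (auto intro: strict_monoI append_less_append_left)
  then have "pad_right A (length B) @ pad_left (length A) B \<le> ov A R"
    unfolding ov_def BR(2) by (rule append_le_append_left)
  finally show ?thesis .
qed

lemma supp_dprod_list:
  "\<forall>X\<in>set Ms. packed k X \<Longrightarrow>
    supp (dprod_list Ms :: mat \<Rightarrow> 'a::field) \<subseteq>
      {N \<in> packed_of_size k (length (foldr ov Ms [])). N \<le> foldr ov Ms []}"
proof (induction Ms)
  case Nil
  then show ?case by (simp add: dprod_list_Nil packed_of_size_def)
next
  case (Cons A Ms)
  let ?y = "dprod_list Ms :: mat \<Rightarrow> 'a" and ?R = "foldr ov Ms []"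
  have A: "packed k A" using Cons.prems by simp
  have IH: "supp ?y \<subseteq> {N \<in> packed_of_size k (length ?R). N \<le> ?R}" using Cons by simp
  show ?case
  proof
    fix N assume "N \<in> supp (dprod_list (A # Ms) :: mat \<Rightarrow> 'a)"
    then have "dprod (basis_elt A) ?y N \<noteq> 0" by (simp add: supp_iff dprod_list_Cons)
    then obtain B where B: "B \<in> supp ?y" "?y B * shuffle_elt A B N \<noteq> 0"
      unfolding dprod_basis_elt_left by (rule sum_nonzeroE)
    then have N: "N \<in> row_shuffles A B" by (auto simp: shuffle_elt_def split: if_splits)
    have "packed k B" "length B = length ?R" "B \<le> ?R" using B(1) IH by (auto simp: packed_of_size_def)
    then show "N \<in> {N \<in> packed_of_size k (length (foldr ov (A # Ms) [])). N \<le> foldr ov (A # Ms) []}"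
      using packed_row_shuffle[OF A _ N] length_row_shuffles[OF N] row_shuffle_le_ov[OF A N]
      by (simp add: packed_of_size_def)
  qed
qed

lemma finite_supp_dprod_list:
  "\<forall>X\<in>set Ms. packed k X \<Longrightarrow> finite (supp (dprod_list Ms :: mat \<Rightarrow> 'a::field))"
  by (rule finite_subset[OF supp_dprod_list]) (auto intro: finite_subset[OF _ finite_packed_of_size])

lemma dprod_list_diag:
  "\<forall>X\<in>set Ms. packed k X \<Longrightarrow> (dprod_list Ms :: mat \<Rightarrow> 'a::field) (foldr ov Ms []) = 1"
proof (induction Ms)
  case Nil
  then show ?case by (simp add: dprod_list_Nil basis_elt_def)
next
  case (Cons A Ms)
  let ?y = "dprod_list Ms :: mat \<Rightarrow> 'a" and ?R = "foldr ov Ms []"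
  have A: "packed k A" and fin: "finite (supp ?y)"
    using Cons.prems finite_supp_dprod_list[of Ms k] by auto
  have "dprod_list (A # Ms) (ov A ?R) = (\<Sum>B\<in>supp ?y. if B = ?R then ?y B else 0)"
    unfolding dprod_list_Cons dprod_basis_elt_left
    by (rule sum.cong) (auto simp: shuffle_elt_def ov_in_row_shuffles_iff[OF A])
  also have "\<dots> = 1" using Cons fin by (simp add: supp_iff)
  finally show ?case by simp
qed

lemma supp_W: "packed k M \<Longrightarrow> supp (W k M :: mat \<Rightarrow> 'a::field) \<subseteq> {N \<in> packed_of_size k (length M). N \<le> M}"
  using supp_dprod_list[of "factors k M" k] factorization_factors[of k M] connected_packed
  by (simp add: W_eq_dprod_list)

lemma finite_supp_W: "packed k M \<Longrightarrow> finite (supp (W k M :: mat \<Rightarrow> 'a::field))"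
  using finite_supp_dprod_list[of "factors k M" k] factorization_factors[of k M] connected_packed
  by (simp add: W_eq_dprod_list)

lemma W_diag: "packed k M \<Longrightarrow> (W k M :: mat \<Rightarrow> 'a::field) M = 1"
  using dprod_list_diag[of "factors k M" k] factorization_factors[of k M] connected_packed
  by (simp add: W_eq_dprod_list)

lemma W_nonzeroD:
  "packed k M \<Longrightarrow> (W k M :: mat \<Rightarrow> 'a::field) N \<noteq> 0 \<Longrightarrow> N \<in> packed_of_size k (length M) \<and> N \<le> M"
  using supp_W[of k M] by (auto simp: supp_iff)

lemma W_Nil: "W k [] = unit_elt"
  by (simp add: W_def)

lemma W_ov: "connected k A \<Longrightarrow> packed k N \<Longrightarrow> W k (ov A N) = dprod (basis_elt A) (W k N)"
  by (simp add: W_eq_dprod_list factors_ov dprod_list_Cons)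

lemma sum_mult_W_at_minimal:
  fixes f :: "mat \<Rightarrow> 'a::field"
  assumes B: "packed k B" and S: "finite S" "B \<in> S"
    and min: "\<And>N. N \<in> packed_of_size k (length B) \<Longrightarrow> N < B \<Longrightarrow> f N = 0"
  shows "(\<Sum>N\<in>S. f N * W k B N) = f B"
proof -
  have "f N * W k B N = 0" if "N \<in> S - {B}" for N
    using W_nonzeroD[OF B, of N] min[of N] that by force
  then have "(\<Sum>N\<in>S. f N * W k B N) = f B * W k B B"
    using sum.remove[OF S] sum.neutral by (metis (no_types, lifting) add.right_neutral)
  then show ?thesis using W_diag[OF B, where 'a='a] by simp
qed

section \<open>The pairing and the dual basis V\<close>

lemma PMk_iff: "x \<in> PMk k \<longleftrightarrow> finite (supp x) \<and> (\<forall>M\<in>supp x. packed k M)"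
  by (auto simp: PMk_def supp_def)

lemma pairing_supp: "pairing w v = (\<Sum>N\<in>supp v. w N * v N)"
  by (simp add: pairing_def supp_def)

lemma pairing_eq_sum: "finite S \<Longrightarrow> supp v \<subseteq> S \<Longrightarrow> pairing w v = (\<Sum>N\<in>S. w N * v N)"
  unfolding pairing_supp by (rule sum.mono_neutral_left) (auto simp: supp_def)

lemma pairing_zero [simp]: "pairing w 0 = 0"
  by (simp add: pairing_def)

lemma pairing_add:
  assumes "finite (supp v1)" "finite (supp v2)"
  shows "pairing w (v1 + v2) = pairing w v1 + pairing w v2"
proof -
  let ?S = "supp v1 \<union> supp v2"
  have "supp (v1 + v2) \<subseteq> ?S" by (auto simp: supp_def)
  then show ?thesis
    using pairing_eq_sum[of ?S v1 w] pairing_eq_sum[of ?S v2 w] pairing_eq_sum[of ?S "v1 + v2" w] assms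
    by (simp add: distrib_left sum.distrib)
qed

lemma pairing_diff:
  assumes "finite (supp v1)" "finite (supp v2)"
  shows "pairing w (v1 - v2) = pairing w v1 - pairing w v2"
proof -
  let ?S = "supp v1 \<union> supp v2"
  have "supp (v1 - v2) \<subseteq> ?S" by (auto simp: supp_def)
  then show ?thesis
    using pairing_eq_sum[of ?S v1 w] pairing_eq_sum[of ?S v2 w] pairing_eq_sum[of ?S "v1 - v2" w] assms
    by (simp add: right_diff_distrib sum_subtractf)
qed

lemma pairing_scl: "pairing w (scl c v) = c * pairing w v"
proof (cases "c = 0")
  case False
  then have "supp (scl c v) = supp v" by (auto simp: supp_def scl_def)
  then show ?thesis by (simp add: pairing_supp scl_def sum_distrib_left mult.left_commute)
qed (simp add: scl_def pairing_def)

lemma supp_lincomb: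
  fixes f :: "'i \<Rightarrow> mat \<Rightarrow> 'a::field"
  shows "supp (\<lambda>N. \<Sum>i\<in>I. c i * f i N) \<subseteq> (\<Union>i\<in>I. supp (f i))"
proof
  fix N assume "N \<in> supp (\<lambda>N. \<Sum>i\<in>I. c i * f i N)"
  then obtain i where "i \<in> I" "c i * f i N \<noteq> 0" unfolding supp_iff by (rule sum_nonzeroE)
  then show "N \<in> (\<Union>i\<in>I. supp (f i))" by (auto simp: supp_iff)
qed

lemma pairing_sum:
  assumes "finite I" "\<And>i. i \<in> I \<Longrightarrow> finite (supp (f i))"
  shows "pairing w (\<lambda>N. \<Sum>i\<in>I. c i * f i N) = (\<Sum>i\<in>I. c i * pairing w (f i))"
proof -
  let ?S = "\<Union>i\<in>I. supp (f i)"
  have fin: "finite ?S" using assms by auto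
  have "pairing w (\<lambda>N. \<Sum>i\<in>I. c i * f i N) = (\<Sum>N\<in>?S. w N * (\<Sum>i\<in>I. c i * f i N))"
    by (rule pairing_eq_sum[OF fin supp_lincomb])
  also have "\<dots> = (\<Sum>i\<in>I. c i * (\<Sum>N\<in>?S. w N * f i N))"
    by (simp add: sum_distrib_left sum_distrib_right mult.assoc mult.left_commute) (rule sum.swap)
  also have "\<dots> = (\<Sum>i\<in>I. c i * pairing w (f i))"
    by (rule sum.cong[OF refl]) (use assms fin in \<open>auto intro!: pairing_eq_sum[symmetric]\<close>)
  finally show ?thesis .
qed

lemma pairing_basis_elt_left:
  assumes "finite (supp x)"
  shows "pairing (basis_elt B) x = x B"
proof -
  have "pairing (basis_elt B) x = (\<Sum>N\<in>supp x. if N = B then x N else 0)"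
    unfolding pairing_supp by (rule sum.cong) (auto simp: basis_elt_def)
  also have "\<dots> = x B" using assms by (simp add: supp_iff)
  finally show ?thesis .
qed

lemma pairing_basis_elt_right: "pairing w (basis_elt B) = w B"
  unfolding pairing_supp supp_basis_elt by (simp add: basis_elt_def)

lemma eq_0_if_pairing_W_eq_0:
  fixes v :: "mat \<Rightarrow> 'a::field"
  assumes v: "v \<in> PMk k" and h: "\<And>M. packed k M \<Longrightarrow> pairing (W k M) v = 0"
  shows "v = 0"
proof (rule ccontr)
  assume "v \<noteq> 0"
  then have ne: "supp v \<noteq> {}" by (auto simp: supp_def fun_eq_iff)
  have fin: "finite (supp v)" using v by (simp add: PMk_iff)
  define N0 where "N0 = Min (supp v)"
  have N0: "N0 \<in> supp v" "\<And>N. N \<in> supp v \<Longrightarrow> N0 \<le> N" using fin ne by (auto simp: N0_def)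
  have p0: "packed k N0" using v N0(1) by (simp add: PMk_iff)
  have "pairing (W k N0) v = (\<Sum>N\<in>supp v. v N * W k N0 N)"
    by (simp add: pairing_supp mult.commute)
  also have "\<dots> = v N0"
    by (rule sum_mult_W_at_minimal[OF p0 fin N0(1)]) (use N0(2) in \<open>force simp: supp_iff\<close>)
  finally show False using h[OF p0] N0(1) by (simp add: supp_iff)
qed

lemma coeff_eq_0_if_pairing_with_W_eq_0:
  fixes g :: "mat \<Rightarrow> 'a::field"
  assumes h: "\<And>B. B \<in> packed_of_size k n \<Longrightarrow> pairing g (W k B) = 0" and B: "B \<in> packed_of_size k n"
  shows "g B = 0"
proof (rule ccontr)
  let ?Z = "{B \<in> packed_of_size k n. g B \<noteq> 0}"
  assume "g B \<noteq> 0"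
  then have ne: "?Z \<noteq> {}" using B by auto
  have fin: "finite ?Z" using finite_packed_of_size by auto
  define B0 where "B0 = Min ?Z"
  have B0: "B0 \<in> ?Z" "\<And>B. B \<in> ?Z \<Longrightarrow> B0 \<le> B"
    using Min_in[OF fin ne] Min_le[OF fin] by (auto simp: B0_def)
  then have p0: "packed k B0" "length B0 = n" by (auto simp: packed_of_size_def)
  have "pairing g (W k B0) = (\<Sum>N\<in>supp (W k B0 :: mat \<Rightarrow> 'a). g N * W k B0 N)"
    by (rule pairing_supp)
  also have "\<dots> = g B0"
    by (rule sum_mult_W_at_minimal[OF p0(1) finite_supp_W[OF p0(1)]])
      (use W_diag[OF p0(1), where 'a='a] B0(2) p0(2) in \<open>force simp: supp_iff\<close>)+
  finally show False using h B0(1) by simp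
qed

lemma pairing_W_other_size:
  assumes "packed k M'" "supp v \<subseteq> packed_of_size k n" "length M' \<noteq> n"
  shows "pairing (W k M') v = 0"
  unfolding pairing_supp
proof (rule sum.neutral, rule ballI)
  fix N assume "N \<in> supp v"
  then have "N \<notin> packed_of_size k (length M')" using assms(2,3) by (auto simp: packed_of_size_def)
  then show "W k M' N * v N = 0" using W_nonzeroD[OF assms(1)] by auto
qed

(* Back substitution: by triangularity of W, adding a multiple of F_b for the largest
   matrix b considered so far does not change the pairings with the smaller W^a. *)
lemma ex_dual_W_on:
  fixes M :: mat
  assumes "finite T" "T \<subseteq> packed_of_size k n"
  shows "\<exists>v::mat \<Rightarrow> 'a::field. supp v \<subseteq> packed_of_size k n \<and>
           (\<forall>M'\<in>T. pairing (W k M') v = (if M' = M then 1 else 0))"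
  using assms
proof (induction T rule: finite_linorder_max_induct)
  case empty
  show ?case by (intro exI[of _ 0]) (simp add: supp_def)
next
  case (insert b T)
  then obtain v :: "mat \<Rightarrow> 'a" where v: "supp v \<subseteq> packed_of_size k n"
    "\<forall>M'\<in>T. pairing (W k M') v = (if M' = M then 1 else 0)" by auto
  have b: "b \<in> packed_of_size k n" "packed k b" using insert.prems by (auto simp: packed_of_size_def)
  define c where "c = (if b = M then 1 else 0) - pairing (W k b) v"
  define v' where "v' = v + scl c (basis_elt b)"
  have fin: "finite (supp v)" using v(1) finite_packed_of_size finite_subset by blast
  have "finite (supp (scl c (basis_elt b)))"
    by (rule finite_subset[of _ "{b}"]) (auto simp: supp_def scl_def basis_elt_def)
  then have pairing_v': "pairing w v' = pairing w v + c * w b" for w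
    using pairing_add[OF fin] by (simp add: v'_def pairing_scl pairing_basis_elt_right)
  have "supp v' \<subseteq> packed_of_size k n" using v(1) b(1) by (auto simp: supp_def v'_def scl_def basis_elt_def)
  moreover have "pairing (W k a) v' = (if a = M then 1 else 0)" if "a \<in> insert b T" for a
  proof (cases "a = b")
    case True
    then show ?thesis using pairing_v' W_diag[OF b(2), where 'a='a] by (simp add: c_def)
  next
    case False
    then have "a \<in> T" "a < b" "packed k a" using that insert by (auto simp: packed_of_size_def)
    then show ?thesis using pairing_v' v(2) W_nonzeroD[of k a b] by force
  qed
  ultimately show ?case by blast
qed

lemma ex_dual_W:
  assumes "packed k M"
  shows "\<exists>v::mat \<Rightarrow> 'a::field. supp v \<subseteq> packed_of_size k (length M) \<and>
           (\<forall>M'. packed k M' \<longrightarrow> pairing (W k M') v = (if M' = M then 1 else 0))"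
proof -
  obtain v :: "mat \<Rightarrow> 'a" where v: "supp v \<subseteq> packed_of_size k (length M)"
    "\<forall>M'\<in>packed_of_size k (length M). pairing (W k M') v = (if M' = M then 1 else 0)"
    using ex_dual_W_on[OF finite_packed_of_size subset_refl] by blast
  have "pairing (W k M') v = (if M' = M then 1 else 0)" if "packed k M'" for M'
    using v pairing_W_other_size[OF that v(1)] that by (cases "length M' = length M") (auto simp: packed_of_size_def)
  then show ?thesis using v(1) by blast
qed

lemma V_eqI:
  fixes v :: "mat \<Rightarrow> 'a::field"
  assumes "v \<in> PMk k" "\<And>M'. packed k M' \<Longrightarrow> pairing (W k M') v = (if M' = M then 1 else 0)"
  shows "V k M = v"
  unfolding V_def
proof (rule the_equality)
  fix u :: "mat \<Rightarrow> 'a" assume u: "u \<in> PMk k \<and> (\<forall>M'. packed k M' \<longrightarrow> pairing (W k M') u = (if M' = M then 1 else 0))"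
  have fin: "finite (supp u)" "finite (supp v)" using u assms(1) by (auto simp: PMk_iff)
  have "supp (u - v) \<subseteq> supp u \<union> supp v" by (auto simp: supp_def)
  then have "u - v \<in> PMk k"
    using u assms(1) fin unfolding PMk_iff by (blast intro: finite_subset)
  moreover have "pairing (W k M') (u - v) = 0" if "packed k M'" for M'
    using pairing_diff[OF fin] u assms(2) that by simp
  ultimately show "u = v" using eq_0_if_pairing_W_eq_0 by fastforce
qed (use assms in blast)

lemma V_dual:
  assumes "packed k M"
  shows "(V k M :: mat \<Rightarrow> 'a::field) \<in> PMk k"
    and "supp (V k M :: mat \<Rightarrow> 'a) \<subseteq> packed_of_size k (length M)"
    and "packed k M' \<Longrightarrow> pairing (W k M') (V k M :: mat \<Rightarrow> 'a) = (if M' = M then 1 else 0)"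
proof -
  obtain v :: "mat \<Rightarrow> 'a" where v: "supp v \<subseteq> packed_of_size k (length M)"
    "\<forall>M'. packed k M' \<longrightarrow> pairing (W k M') v = (if M' = M then 1 else 0)"
    using ex_dual_W[OF assms] by blast
  have v_PMk: "v \<in> PMk k"
    using v(1) finite_subset[OF v(1) finite_packed_of_size] by (auto simp: PMk_iff packed_of_size_def)
  then have V_eq: "V k M = v" using v(2) by (intro V_eqI) auto
  show "(V k M :: mat \<Rightarrow> 'a) \<in> PMk k" "supp (V k M :: mat \<Rightarrow> 'a) \<subseteq> packed_of_size k (length M)"
    using v_PMk v(1) unfolding V_eq by auto
  show "packed k M' \<Longrightarrow> pairing (W k M') (V k M :: mat \<Rightarrow> 'a) = (if M' = M then 1 else 0)"
    using v(2) unfolding V_eq by auto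
qed

lemma lincomb_V_in_PMk:
  assumes "finite S" "\<forall>M\<in>S. packed k M"
  shows "(\<lambda>N. \<Sum>M\<in>S. c M * (V k M :: mat \<Rightarrow> 'a::field) N) \<in> PMk k"
proof -
  have VM: "finite (supp (V k M :: mat \<Rightarrow> 'a))" "\<forall>N\<in>supp (V k M :: mat \<Rightarrow> 'a). packed k N" if "M \<in> S" for M
    using V_dual(1)[of k M] assms(2) that by (auto simp: PMk_iff)
  have "finite (\<Union>M\<in>S. supp (V k M :: mat \<Rightarrow> 'a))" using assms(1) VM(1) by blast
  then show ?thesis
    using supp_lincomb[of c "V k" S] VM(2) unfolding PMk_iff by (blast intro: finite_subset)
qed

lemma pairing_W_lincomb_V:
  assumes "finite S" "\<forall>M\<in>S. packed k M" "packed k M'"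
  shows "pairing (W k M') (\<lambda>N. \<Sum>M\<in>S. c M * (V k M :: mat \<Rightarrow> 'a::field) N) = (if M' \<in> S then c M' else 0)"
proof -
  have "\<forall>M\<in>S. finite (supp (V k M :: mat \<Rightarrow> 'a))" using V_dual(1) assms(2) by (blast intro: PMk_iff[THEN iffD1, THEN conjunct1])
  then have "pairing (W k M') (\<lambda>N. \<Sum>M\<in>S. c M * (V k M :: mat \<Rightarrow> 'a) N) =
      (\<Sum>M\<in>S. c M * pairing (W k M') (V k M :: mat \<Rightarrow> 'a))"
    using pairing_sum[OF assms(1)] by blast
  also have "\<dots> = (\<Sum>M\<in>S. if M' = M then c M else 0)"
    by (rule sum.cong) (use V_dual(3)[where 'a='a] assms(2,3) in auto)
  finally show ?thesis using assms(1) by simp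
qed

lemma expansion_in_V:
  fixes x :: "mat \<Rightarrow> 'a::field"
  assumes x: "x \<in> PMk k"
  obtains S where "finite S" "\<forall>M\<in>S. packed k M" "x = (\<lambda>N. \<Sum>M\<in>S. pairing (W k M) x * V k M N)"
proof
  let ?S = "\<Union>N\<in>supp x. packed_of_size k (length N)"
  let ?e = "\<lambda>N. \<Sum>M\<in>?S. pairing (W k M) x * (V k M :: mat \<Rightarrow> 'a) N"
  have fin_x: "finite (supp x)" using x by (simp add: PMk_iff)
  show S: "finite ?S" "\<forall>M\<in>?S. packed k M"
    using finite_packed_of_size fin_x by (auto simp: packed_of_size_def)
  have e: "?e \<in> PMk k" by (rule lincomb_V_in_PMk[OF S])
  have fin: "finite (supp x)" "finite (supp ?e)" using x e by (simp_all add: PMk_iff)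
  have sub: "supp (x - ?e) \<subseteq> supp x \<union> supp ?e" by (auto simp: supp_def)
  then have "finite (supp (x - ?e))" using fin by (simp add: finite_subset)
  moreover have "\<forall>M\<in>supp (x - ?e). packed k M" using sub x e by (auto simp: PMk_iff)
  ultimately have "x - ?e \<in> PMk k" by (simp add: PMk_iff)
  moreover have "pairing (W k M') (x - ?e) = 0" if M': "packed k M'" for M'
  proof -
    have "pairing (W k M') x = 0" if "M' \<notin> ?S"
      unfolding pairing_supp
    proof (rule sum.neutral, rule ballI)
      fix N assume "N \<in> supp x"
      then have "N \<notin> packed_of_size k (length M')"
        using that M' by (auto simp: packed_of_size_def)
      then show "W k M' N * x N = 0" using W_nonzeroD[OF M'] by auto
    qed
    then show ?thesis
      unfolding pairing_diff[OF fin] pairing_W_lincomb_V[OF S M'] by simp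
  qed
  ultimately have "x - ?e = 0" by (rule eq_0_if_pairing_W_eq_0)
  then show "x = ?e" by simp
qed

section \<open>The coproduct is dual to the row shuffle product\<close>

lemma cp_eq_filter_nonzero_row:
  assumes len: "\<forall>r\<in>set X. length r = m" and col: "\<forall>i<m. \<exists>r\<in>set X. r ! i \<noteq> 0"
  shows "cp X = filter nonzero_row X"
proof -
  let ?S = "{j. \<exists>r'\<in>set X. j < length r' \<and> r' ! j \<noteq> 0}"
  have "nths r ?S = r" if "r \<in> set X" for r
    by (rule nths_all) (use len col that in fastforce)
  then show ?thesis
    unfolding cp_def nonzero_row_def[abs_def] by (auto intro: map_idI)
qed

lemma nonzero_column_take:
  assumes "packed k P" "j \<le> length P"
  shows "\<forall>i<j. \<exists>r\<in>set (map (take j) P). r ! i \<noteq> 0"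
proof (intro allI impI)
  fix i assume i: "i < j"
  then have "i < length P" using assms(2) by simp
  then obtain r where "r \<in> set P" "r ! i \<noteq> 0" using packedD(4)[OF assms(1)] by blast
  then show "\<exists>r\<in>set (map (take j) P). r ! i \<noteq> 0" using i by (intro bexI[of _ "take j r"]) auto
qed

lemma nonzero_column_drop:
  assumes "packed k P"
  shows "\<forall>i<length P - j. \<exists>r\<in>set (map (drop j) P). r ! i \<noteq> 0"
proof (intro allI impI)
  fix i assume i: "i < length P - j"
  then have "j + i < length P" by simp
  then obtain r where r: "r \<in> set P" "r ! (j + i) \<noteq> 0" using packedD(4)[OF assms] by blast
  then have "drop j r ! i \<noteq> 0" using i packedD(1)[OF assms r(1)] by simp
  then show "\<exists>r\<in>set (map (drop j) P). r ! i \<noteq> 0" using r(1) by auto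
qed

lemma cp_take:
  assumes "packed k P" "j \<le> length P"
  shows "cp (map (take j) P) = filter nonzero_row (map (take j) P)"
  by (rule cp_eq_filter_nonzero_row[OF _ nonzero_column_take[OF assms]])
    (use packedD(1)[OF assms(1)] assms(2) in auto)

lemma cp_drop:
  assumes "packed k P"
  shows "cp (map (drop j) P) = filter nonzero_row (map (drop j) P)"
  by (rule cp_eq_filter_nonzero_row[OF _ nonzero_column_drop[OF assms]])
    (use packedD(1)[OF assms] in auto)

lemma length_square_filter_nonzero_row:
  assumes A: "filter nonzero_row X = A" "is_square A"
    and len: "\<forall>r\<in>set X. length r = m" and col: "\<forall>i<m. \<exists>r\<in>set X. r ! i \<noteq> 0"
  shows "length A = m"
proof (cases A)
  case Nil
  show ?thesis
  proof (rule ccontr)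
    assume "length A \<noteq> m"
    then have m: "0 < m" using Nil by simp
    then obtain r where "r \<in> set X" "r ! 0 \<noteq> 0" using col by blast
    moreover from this have "nonzero_row r" using len m by (auto simp: nonzero_row_iff_nth)
    ultimately show False using A(1) Nil by (simp add: filter_empty_conv)
  qed
next
  case (Cons u A')
  then have "u \<in> set (filter nonzero_row X)" using A(1) by simp
  then have "u \<in> set X" by simp
  then show ?thesis using A Cons len by (auto simp: is_square_def)
qed

lemma length_filter_disj_conj:
  "length (filter P xs) + length (filter Q xs) =
     length (filter (\<lambda>x. P x \<or> Q x) xs) + length (filter (\<lambda>x. P x \<and> Q x) xs)"
  by (induction xs) auto

(* Counting rows: the two blocks have j and n - j nonzero rows, and each of the n rows
   is nonzero in at least one block. *)
lemma nonzero_in_exactly_one_block: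
  assumes P: "packed k P" "j \<le> length P"
    and A: "filter nonzero_row (map (take j) P) = A" "is_square A"
    and B: "filter nonzero_row (map (drop j) P) = B" "is_square B"
    and r: "r \<in> set P"
  shows "nonzero_row (take j r) \<longleftrightarrow> \<not> nonzero_row (drop j r)"
proof -
  let ?p = "\<lambda>r. nonzero_row (take j r)" and ?q = "\<lambda>r. nonzero_row (drop j r)"
  have "length A = j"
    using length_square_filter_nonzero_row[OF A _ nonzero_column_take[OF P]] packedD(1)[OF P(1)] P(2) by auto
  moreover have "map (take j) (filter ?p P) = A" using A(1) by (simp add: filter_map o_def)
  ultimately have p: "length (filter ?p P) = j" by (metis length_map)
  have "length B = length P - j"
    using length_square_filter_nonzero_row[OF B _ nonzero_column_drop[OF P(1)]] packedD(1)[OF P(1)] by auto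
  moreover have "map (drop j) (filter ?q P) = B" using B(1) by (simp add: filter_map o_def)
  ultimately have q: "length (filter ?q P) = length P - j" by (metis length_map)
  have split: "nonzero_row r \<longleftrightarrow> ?p r \<or> ?q r" for r
    using nonzero_row_append[of "take j r" "drop j r"] by simp
  have "filter (\<lambda>r. ?p r \<or> ?q r) P = P"
    by (rule filter_True) (use packedD(3)[OF P(1)] split in blast)
  then have "filter (\<lambda>r. ?p r \<and> ?q r) P = []"
    using length_filter_disj_conj[of ?p P ?q] p q P(2) by simp
  moreover have "?p r \<or> ?q r" using packedD(3)[OF P(1) r] split by blast
  ultimately show ?thesis using r by (auto simp: filter_empty_conv)
qed

lemma column_split_eq_pads:
  assumes P: "packed k P" "j \<le> length P"
    and A: "filter nonzero_row (map (take j) P) = A" "is_square A"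
    and B: "filter nonzero_row (map (drop j) P) = B" "is_square B"
  shows "filter (\<lambda>r. nonzero_row (take j r)) P = pad_right A (length B)"
    and "filter (\<lambda>r. \<not> nonzero_row (take j r)) P = pad_left j B"
proof -
  let ?p = "\<lambda>r. nonzero_row (take j r)"
  note excl = nonzero_in_exactly_one_block[OF P A B]
  have len: "length r = length P" if "r \<in> set P" for r using packedD(1)[OF P(1) that] .
  have lB: "length B = length P - j"
    using length_square_filter_nonzero_row[OF B _ nonzero_column_drop[OF P(1)]] len by auto
  have "A = map (take j) (filter ?p P)" using A(1) by (simp add: filter_map o_def)
  then have "pad_right A (length B) = map (\<lambda>r. take j r @ replicate (length P - j) 0) (filter ?p P)"
    using lB by (simp add: pad_right_def)
  also have "\<dots> = filter ?p P"
  proof (rule map_idI)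
    fix r assume "r \<in> set (filter ?p P)"
    then have "drop j r = replicate (length P - j) 0"
      using excl len not_nonzero_row_eq_replicate by (metis length_drop mem_Collect_eq set_filter)
    then show "take j r @ replicate (length P - j) 0 = r" by (metis append_take_drop_id)
  qed
  finally show "filter ?p P = pad_right A (length B)" ..
  have "filter (\<lambda>r. nonzero_row (drop j r)) P = filter (\<lambda>r. \<not> ?p r) P"
    using excl by (auto intro: filter_cong)
  moreover have "B = map (drop j) (filter (\<lambda>r. nonzero_row (drop j r)) P)"
    using B(1) by (simp add: filter_map o_def)
  ultimately have "pad_left j B = map (\<lambda>r. replicate j 0 @ drop j r) (filter (\<lambda>r. \<not> ?p r) P)"
    by (simp add: pad_left_def)
  also have "\<dots> = filter (\<lambda>r. \<not> ?p r) P"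
  proof (rule map_idI)
    fix r assume "r \<in> set (filter (\<lambda>r. \<not> ?p r) P)"
    then have "take j r = replicate j 0"
      using len P(2) not_nonzero_row_eq_replicate by (metis length_take min.absorb2 mem_Collect_eq set_filter)
    then show "replicate j 0 @ drop j r = r" by (metis append_take_drop_id)
  qed
  finally show "filter (\<lambda>r. \<not> ?p r) P = pad_left j B" ..
qed

lemma row_shuffles_if_column_split:
  assumes P: "packed k P" "j \<le> length P"
    and A: "filter nonzero_row (map (take j) P) = A" "is_square A"
    and B: "filter nonzero_row (map (drop j) P) = B" "is_square B"
  shows "length A = j \<and> P \<in> row_shuffles A B"
proof -
  have lA: "length A = j"
    using length_square_filter_nonzero_row[OF A _ nonzero_column_take[OF P]] packedD(1)[OF P(1)] P(2) by auto
  moreover have "set A \<subseteq> {r. nonzero_row r}" unfolding A(1)[symmetric] by auto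
  ultimately have "\<forall>r\<in>set A. length r = length A \<and> nonzero_row r"
    using A(2) by (auto simp: is_square_def)
  then have "P \<in> row_shuffles A B"
    using in_row_shuffles_iff_filter column_split_eq_pads[OF P A B] lA by blast
  then show ?thesis using lA by simp
qed

lemma column_split_if_row_shuffles:
  assumes A: "packed k A" and B: "packed k B" and P: "P \<in> row_shuffles A B"
  shows "filter nonzero_row (map (take (length A)) P) = A"
    and "filter nonzero_row (map (drop (length A)) P) = B"
proof -
  let ?p = "\<lambda>r. nonzero_row (take (length A) r)"
  have rows: "\<forall>r\<in>set A. length r = length A \<and> nonzero_row r" using packedD(1,3)[OF A] by blast
  have left: "filter ?p P = pad_right A (length B)" and right: "filter (\<lambda>r. \<not> ?p r) P = pad_left (length A) B"
    using in_row_shuffles_iff_filter[OF rows] P by auto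
  have "filter nonzero_row (map (take (length A)) P) = map (take (length A)) (filter ?p P)"
    by (simp add: filter_map o_def)
  then show "filter nonzero_row (map (take (length A)) P) = A"
    using left rows by (simp add: pad_right_def map_idI)
  have "filter (\<lambda>r. nonzero_row (drop (length A) r)) P = filter (\<lambda>r. \<not> ?p r) P"
  proof (rule filter_cong[OF refl])
    fix r assume "r \<in> set P"
    then consider (top) u where "u \<in> set A" "r = u @ replicate (length B) 0"
      | (bottom) w where "w \<in> set B" "r = replicate (length A) 0 @ w"
      using set_row_shuffles[OF P] by blast
    then show "nonzero_row (drop (length A) r) \<longleftrightarrow> \<not> ?p r"
      by cases (use rows packedD(3)[OF B] in auto)
  qed
  then have "filter nonzero_row (map (drop (length A)) P) = map (drop (length A)) (pad_left (length A) B)"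
    using right by (simp add: filter_map o_def)
  then show "filter nonzero_row (map (drop (length A)) P) = B"
    by (simp add: pad_left_def o_def)
qed

lemma dcoef_eq:
  assumes P: "packed k P"
  shows "dcoef P A B = (if packed k A \<and> packed k B \<and> P \<in> row_shuffles A B then 1 else 0)"
proof -
  let ?J = "{j. j \<le> length P \<and> is_square (cp (map (take j) P)) \<and> is_square (cp (map (drop j) P)) \<and>
                cp (map (take j) P) = A \<and> cp (map (drop j) P) = B}"
  have J: "j \<in> ?J \<longleftrightarrow> j \<le> length P \<and> is_square A \<and> is_square B \<and>
       filter nonzero_row (map (take j) P) = A \<and> filter nonzero_row (map (drop j) P) = B" for j
    using cp_take[OF P, of j] cp_drop[OF P, of j] by auto
  have dcoef: "dcoef P A B = card ?J" by (simp only: dcoef_def)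
  show ?thesis
  proof (cases "packed k A \<and> packed k B \<and> P \<in> row_shuffles A B")
    case True
    then have sq: "is_square A" "is_square B" by (auto simp: packed_def)
    have J_eq: "?J = {length A}"
    proof (intro set_eqI iffI)
      fix j assume "j \<in> ?J"
      then have j: "j \<le> length P" "filter nonzero_row (map (take j) P) = A"
        "filter nonzero_row (map (drop j) P) = B"
        using J by blast+
      show "j \<in> {length A}" using row_shuffles_if_column_split[OF P j(1,2) sq(1) j(3) sq(2)] by simp
    next
      fix j assume "j \<in> {length A}"
      moreover have "length A \<le> length P" using length_row_shuffles[of P A B] True by simp
      ultimately show "j \<in> ?J"
        using J[THEN iffD2] sq True column_split_if_row_shuffles[of k A B P] by blast
    qed
    show ?thesis unfolding dcoef J_eq using True by simp
  next
    case False
    have J_eq: "?J = {}"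
      using J row_shuffles_if_column_split[OF P] packed_left_of_row_shuffle[OF P]
        packed_right_of_row_shuffle[OF P] False
      by blast
    show ?thesis unfolding dcoef J_eq using False by simp
  qed
qed

lemma coprod_eq_pairing:
  assumes x: "x \<in> PMk k"
  shows "coprod x (A, B) = (if packed k A \<and> packed k B then pairing (shuffle_elt A B) x else 0)"
proof -
  have "coprod x (A, B) = (\<Sum>M\<in>supp x. x M * of_nat (dcoef M A B))"
    by (simp add: coprod_def supp_def)
  also have "\<dots> = (\<Sum>M\<in>supp x. if packed k A \<and> packed k B then shuffle_elt A B M * x M else 0)"
    by (rule sum.cong[OF refl]) (use x in \<open>auto simp: PMk_iff dcoef_eq shuffle_elt_def\<close>)
  also have "\<dots> = (if packed k A \<and> packed k B then pairing (shuffle_elt A B) x else 0)"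
    by (cases "packed k A \<and> packed k B") (auto simp: pairing_supp)
  finally show ?thesis .
qed

lemma shuffle_elt_Nil_left: "shuffle_elt [] B = basis_elt B"
  by (simp add: shuffle_elt_def basis_elt_def fun_eq_iff)

lemma shuffle_elt_Nil_right: "shuffle_elt A [] = basis_elt A"
  by (simp add: shuffle_elt_def basis_elt_def fun_eq_iff)

lemma coprod_eq_primitive_iff:
  assumes x: "x \<in> PMk k"
  shows "coprod x (A, B) = (tens x unit_elt + tens unit_elt x) (A, B) \<longleftrightarrow>
    (packed k A \<and> packed k B \<longrightarrow>
       (if A = [] \<and> B = [] then x [] = 0 else A = [] \<or> B = [] \<or> pairing (shuffle_elt A B) x = 0))"
proof -
  have fin: "finite (supp x)" and x_packed: "x M \<noteq> 0 \<Longrightarrow> packed k M" for M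
    using x by (auto simp: PMk_iff supp_iff)
  have rhs: "(tens x unit_elt + tens unit_elt x) (A, B) =
      (if B = [] then x A else 0) + (if A = [] then x B else 0)"
    by (simp add: tens_def unit_elt_def basis_elt_def)
  show ?thesis
  proof (cases "packed k A \<and> packed k B")
    case False
    then have "(if B = [] then x A else 0) + (if A = [] then x B else 0) = 0"
      using x_packed by auto
    then show ?thesis unfolding rhs using False by (auto simp: coprod_eq_pairing[OF x])
  next
    case packed: True
    show ?thesis
    proof (cases "A = [] \<and> B = []")
      case True
      then have AB: "A = []" "B = []" by simp_all
      have "coprod x ([], []) = x []"
        using pairing_basis_elt_left[OF fin] by (simp add: coprod_eq_pairing[OF x] shuffle_elt_Nil_left)
      then show ?thesis
        using rhs unfolding AB by (simp only: if_True simp_thms packed_Nil add_cancel_right_right)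
    next
      case False
      then show ?thesis
        unfolding rhs using packed pairing_basis_elt_left[OF fin]
        by (auto simp: coprod_eq_pairing[OF x] shuffle_elt_Nil_left shuffle_elt_Nil_right)
    qed
  qed
qed

lemma prim_iff:
  "x \<in> prim k \<longleftrightarrow> x \<in> PMk k \<and> x [] = 0 \<and>
     (\<forall>A B. packed k A \<longrightarrow> packed k B \<longrightarrow> A \<noteq> [] \<longrightarrow> B \<noteq> [] \<longrightarrow> pairing (shuffle_elt A B) x = 0)"
proof (cases "x \<in> PMk k")
  case True
  have "x \<in> prim k \<longleftrightarrow> (\<forall>A B. coprod x (A, B) = (tens x unit_elt + tens unit_elt x) (A, B))"
    using True by (auto simp: prim_def fun_eq_iff)
  also have "\<dots> \<longleftrightarrow> x [] = 0 \<and>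
     (\<forall>A B. packed k A \<longrightarrow> packed k B \<longrightarrow> A \<noteq> [] \<longrightarrow> B \<noteq> [] \<longrightarrow> pairing (shuffle_elt A B) x = 0)"
    unfolding coprod_eq_primitive_iff[OF True]
  proof
    assume L: "\<forall>A B. packed k A \<and> packed k B \<longrightarrow>
      (if A = [] \<and> B = [] then x [] = 0 else A = [] \<or> B = [] \<or> pairing (shuffle_elt A B) x = 0)"
    then have "x [] = 0" using packed_Nil by metis
    moreover have "pairing (shuffle_elt A B) x = 0"
      if "packed k A" "packed k B" "A \<noteq> []" "B \<noteq> []" for A B
      using L[rule_format, of A B] that by simp
    ultimately show "x [] = 0 \<and>
     (\<forall>A B. packed k A \<longrightarrow> packed k B \<longrightarrow> A \<noteq> [] \<longrightarrow> B \<noteq> [] \<longrightarrow> pairing (shuffle_elt A B) x = 0)"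
      by blast
  next
    assume R: "x [] = 0 \<and>
     (\<forall>A B. packed k A \<longrightarrow> packed k B \<longrightarrow> A \<noteq> [] \<longrightarrow> B \<noteq> [] \<longrightarrow> pairing (shuffle_elt A B) x = 0)"
    show "\<forall>A B. packed k A \<and> packed k B \<longrightarrow>
      (if A = [] \<and> B = [] then x [] = 0 else A = [] \<or> B = [] \<or> pairing (shuffle_elt A B) x = 0)"
      using R by simp blast
  qed
  finally show ?thesis using True by blast
qed (simp add: prim_def)

section \<open>Primitive elements\<close>

lemma pairing_lincomb_left:
  "finite I \<Longrightarrow> pairing (\<lambda>N. \<Sum>i\<in>I. c i * f i N) x = (\<Sum>i\<in>I. c i * pairing (f i) x)"
  unfolding pairing_def sum_distrib_right sum_distrib_left
  by (subst sum.swap) (simp add: mult.assoc)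

lemma pairing_dprod_basis_elt_left:
  "finite (supp y) \<Longrightarrow> pairing (dprod (basis_elt A) y) x = (\<Sum>C\<in>supp y. y C * pairing (shuffle_elt A C) x)"
  unfolding dprod_basis_elt_left[abs_def] by (rule pairing_lincomb_left)

lemma W_eq_dprod_first_factor:
  assumes "packed k M" "M \<noteq> []"
  obtains A y where "connected k A" "W k M = dprod (basis_elt A) (y :: mat \<Rightarrow> 'a::field)"
    "finite (supp y)" "supp y \<subseteq> packed_of_size k (length M - length A)"
    "\<not> connected k M \<Longrightarrow> [] \<notin> supp y"
proof -
  obtain A Ms where f: "factors k M = A # Ms"
    using factorization_factors(2)[OF assms(1)] assms(2) by (cases "factors k M") auto
  have conn: "connected k A" "\<forall>X\<in>set Ms. connected k X" and M: "M = ov A (foldr ov Ms [])"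
    using factorization_factors[OF assms(1)] f by auto
  then have packed: "\<forall>X\<in>set Ms. packed k X" using connected_packed by blast
  have supp: "supp (dprod_list Ms :: mat \<Rightarrow> 'a) \<subseteq> packed_of_size k (length M - length A)"
    using supp_dprod_list[OF packed] M by auto
  have "[] \<notin> supp (dprod_list Ms :: mat \<Rightarrow> 'a)" if "\<not> connected k M"
  proof -
    have "Ms \<noteq> []" using that conn(1) M by auto
    then have "foldr ov Ms [] \<noteq> []" using foldr_ov_eq_Nil_iff conn(2) by blast
    then show ?thesis using supp_dprod_list[OF packed] by (auto simp: packed_of_size_def)
  qed
  then show ?thesis
    using that[OF conn(1) _ finite_supp_dprod_list[OF packed] supp] f
    by (simp add: W_eq_dprod_list dprod_list_Cons)
qed

lemma pairing_W_prim_not_connected: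
  assumes x: "x \<in> prim k" and M: "packed k M" and not_conn: "\<not> connected k M"
  shows "pairing (W k M) x = 0"
proof -
  have fin: "finite (supp x)" and x0: "x [] = 0"
    and shuffles: "\<And>A B. packed k A \<Longrightarrow> packed k B \<Longrightarrow> A \<noteq> [] \<Longrightarrow> B \<noteq> [] \<Longrightarrow> pairing (shuffle_elt A B) x = 0"
    using x unfolding prim_iff PMk_iff by auto
  show ?thesis
  proof (cases "M = []")
    case True
    then show ?thesis using pairing_basis_elt_left[OF fin] x0 by (simp add: W_Nil unit_elt_def)
  next
    case False
    then obtain A and y :: "mat \<Rightarrow> 'a" where y: "connected k A" "W k M = dprod (basis_elt A) y"
      "finite (supp y)" "supp y \<subseteq> packed_of_size k (length M - length A)" "[] \<notin> supp y"
      using W_eq_dprod_first_factor[OF M] not_conn by metis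
    have "pairing (W k M) x = (\<Sum>C\<in>supp y. y C * pairing (shuffle_elt A C) x)"
      unfolding y(2) by (rule pairing_dprod_basis_elt_left[OF y(3)])
    also have "\<dots> = 0"
      using y(4,5) shuffles[OF connected_packed[OF y(1)] _ connected_nonempty[OF y(1)]]
      by (intro sum.neutral) (auto simp: packed_of_size_def)
    finally show ?thesis .
  qed
qed

lemma pairing_pairing:
  assumes "finite (supp w)"
  shows "pairing (\<lambda>C. pairing (f C) v) w = pairing (\<lambda>N. \<Sum>C\<in>supp w. w C * f C N) v"
  unfolding pairing_lincomb_left[OF assms] pairing_supp[of "\<lambda>C. pairing (f C) v" w]
  by (simp add: mult.commute)

lemma pairing_shuffle_elt_connected_V:
  assumes A: "connected k A" and B: "packed k B" "B \<noteq> []" and M: "connected k M"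
  shows "pairing (shuffle_elt A B) (V k M :: mat \<Rightarrow> 'a::field) = 0"
proof (rule coeff_eq_0_if_pairing_with_W_eq_0[where g = "\<lambda>C. pairing (shuffle_elt A C) (V k M :: mat \<Rightarrow> 'a)"])
  fix C assume "C \<in> packed_of_size k (length B)"
  then have C: "packed k C" "C \<noteq> []" using B by (auto simp: packed_of_size_def)
  have "ov A C \<noteq> M"
  proof
    assume "ov A C = M"
    then have "A = M \<or> C = M" "length M = length A + length C"
      using M connected_packed[OF A] C(1) unfolding connected_def by auto
    then show False using C(2) connected_nonempty[OF A] by auto
  qed
  then have "pairing (W k (ov A C)) (V k M :: mat \<Rightarrow> 'a) = 0"
    using V_dual(3)[OF connected_packed[OF M] packed_ov[OF connected_packed[OF A] C(1)]] by simp
  then show "pairing (\<lambda>C. pairing (shuffle_elt A C) (V k M :: mat \<Rightarrow> 'a)) (W k C) = 0"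
    using W_ov[OF A C(1), where 'a='a]
      pairing_pairing[OF finite_supp_W[OF C(1)], of "shuffle_elt A :: mat \<Rightarrow> mat \<Rightarrow> 'a"]
    by (simp add: dprod_basis_elt_left[abs_def])
qed (use B in \<open>simp add: packed_of_size_def\<close>)

text \<open>For a general left factor, associativity moves its first connected factor to the front.\<close>

lemma pairing_shuffle_elt_V:
  assumes A: "packed k A" "A \<noteq> []" and B: "packed k B" "B \<noteq> []" and M: "connected k M"
  shows "pairing (shuffle_elt A B) (V k M :: mat \<Rightarrow> 'a::field) = 0"
proof (rule coeff_eq_0_if_pairing_with_W_eq_0[where g = "\<lambda>C. pairing (shuffle_elt C B) (V k M :: mat \<Rightarrow> 'a)"])
  fix C assume "C \<in> packed_of_size k (length A)"
  then have C: "packed k C" "C \<noteq> []" using A by (auto simp: packed_of_size_def)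
  obtain A1 and y :: "mat \<Rightarrow> 'a" where y: "connected k A1" "W k C = dprod (basis_elt A1) y"
    "finite (supp y)" "supp y \<subseteq> packed_of_size k (length C - length A1)"
    using W_eq_dprod_first_factor[OF C] by metis
  define z where "z = dprod y (basis_elt B)"
  have z: "finite (supp z)" "supp z \<subseteq> packed_of_size k (length C - length A1 + length B)"
    unfolding z_def using finite_supp_dprod[OF y(3)] supp_dprod_packed_of_size[OF y(4)] B(1)
    by (auto simp: packed_of_size_def)
  have "pairing (\<lambda>C. pairing (shuffle_elt C B) (V k M :: mat \<Rightarrow> 'a)) (W k C) =
      pairing (dprod (W k C) (basis_elt B)) (V k M :: mat \<Rightarrow> 'a)"
    using pairing_pairing[OF finite_supp_W[OF C(1)], of "\<lambda>C. shuffle_elt C B :: mat \<Rightarrow> 'a"]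
    by (simp add: dprod_basis_elt_right[abs_def])
  also have "\<dots> = pairing (dprod (basis_elt A1) z) (V k M :: mat \<Rightarrow> 'a)"
    unfolding y(2) z_def
    using dprod_assoc_basis_elt[OF connected_packed[OF y(1)] y(3)] y(4)
    by (simp add: packed_of_size_def subset_iff)
  also have "\<dots> = (\<Sum>D\<in>supp z. z D * pairing (shuffle_elt A1 D) (V k M :: mat \<Rightarrow> 'a))"
    by (rule pairing_dprod_basis_elt_left[OF z(1)])
  also have "\<dots> = 0"
  proof (rule sum.neutral, rule ballI)
    fix D assume "D \<in> supp z"
    then have "packed k D" "D \<noteq> []" using z(2) B(2) by (auto simp: packed_of_size_def)
    then show "z D * pairing (shuffle_elt A1 D) (V k M :: mat \<Rightarrow> 'a) = 0"
      using pairing_shuffle_elt_connected_V[OF y(1) _ _ M, where 'a='a] by simp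
  qed
  finally show "pairing (\<lambda>C. pairing (shuffle_elt C B) (V k M :: mat \<Rightarrow> 'a)) (W k C) = 0" .
qed (use A in \<open>simp add: packed_of_size_def\<close>)

lemma V_prim:
  assumes M: "connected k M"
  shows "(V k M :: mat \<Rightarrow> 'a::field) \<in> prim k"
proof -
  have VM: "(V k M :: mat \<Rightarrow> 'a) \<in> PMk k" using V_dual(1)[OF connected_packed[OF M]] .
  have "pairing (W k []) (V k M :: mat \<Rightarrow> 'a) = 0"
    using V_dual(3)[OF connected_packed[OF M] packed_Nil] connected_nonempty[OF M] by simp
  then have "(V k M :: mat \<Rightarrow> 'a) [] = 0"
    using VM pairing_basis_elt_left[of "V k M :: mat \<Rightarrow> 'a"] by (simp add: W_Nil unit_elt_def PMk_iff)
  then show ?thesis unfolding prim_iff using VM pairing_shuffle_elt_V[OF _ _ _ _ M] by blast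
qed

lemma module_scl: "module (scl :: 'a::field \<Rightarrow> (mat \<Rightarrow> 'a) \<Rightarrow> (mat \<Rightarrow> 'a))"
  by unfold_locales (auto simp: scl_def fun_eq_iff algebra_simps)

lemma sum_scl: "(\<Sum>v\<in>t. scl (u v) (f v)) = (\<lambda>N. \<Sum>v\<in>t. u v * f v N)"
  by (rule ext) (simp add: sum_fun_apply scl_def)

lemma prim_subspace: "module.subspace (scl :: 'a::field \<Rightarrow> _) (prim k)"
proof (rule module.subspaceI[OF module_scl])
  show "(0 :: mat \<Rightarrow> 'a) \<in> prim k"
    unfolding prim_iff by (simp add: PMk_iff supp_def pairing_def)
next
  fix x y :: "mat \<Rightarrow> 'a" assume x: "x \<in> prim k" and y: "y \<in> prim k"
  have fin: "finite (supp x)" "finite (supp y)" using x y by (auto simp: prim_iff PMk_iff)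
  have "supp (x + y) \<subseteq> supp x \<union> supp y" by (auto simp: supp_def)
  then have "x + y \<in> PMk k" using x y unfolding prim_iff PMk_iff by (blast intro: finite_subset)
  then show "x + y \<in> prim k" using x y pairing_add[OF fin] unfolding prim_iff by simp
next
  fix c :: 'a and x :: "mat \<Rightarrow> 'a" assume x: "x \<in> prim k"
  have "supp (scl c x) \<subseteq> supp x" by (auto simp: supp_def scl_def)
  then have "scl c x \<in> PMk k" using x unfolding prim_iff PMk_iff by (blast intro: finite_subset)
  then show "scl c x \<in> prim k" using x unfolding prim_iff by (auto simp: pairing_scl) (simp add: scl_def)
qed

lemma inj_on_V: "inj_on (V k :: mat \<Rightarrow> mat \<Rightarrow> 'a::field) {M. packed k M}"
proof (rule inj_onI)
  fix M1 M2 assume M: "M1 \<in> {M. packed k M}" "M2 \<in> {M. packed k M}"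
    and eq: "(V k M1 :: mat \<Rightarrow> 'a) = V k M2"
  have "pairing (W k M1) (V k M2 :: mat \<Rightarrow> 'a) = 1" using V_dual(3)[of k M1 M1, where 'a='a] M eq by simp
  then show "M1 = M2" using V_dual(3)[of k M2 M1, where 'a='a] M by (auto split: if_splits)
qed

lemma V_independent: "\<not> module.dependent (scl :: 'a::field \<Rightarrow> _) (V k ` {M. packed k M})"
  unfolding module.independent_explicit_module[OF module_scl]
proof (intro allI impI)
  fix t and u :: "(mat \<Rightarrow> 'a) \<Rightarrow> 'a" and v
  assume t: "finite t" "t \<subseteq> V k ` {M. packed k M}" and zero: "(\<Sum>w\<in>t. scl (u w) w) = 0" and v: "v \<in> t"
  obtain M0 where M0: "packed k M0" "v = V k M0" using t(2) v by auto
  have coeff: "pairing (W k M0) w = (if w = v then 1 else 0)" if w: "w \<in> t" for w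
  proof -
    obtain M where M: "packed k M" "w = V k M" using t(2) w by auto
    then have "w = v \<longleftrightarrow> M = M0" using inj_onD[OF inj_on_V[of k, where 'a='a], of M M0] M0 by auto
    then show ?thesis using V_dual(3)[OF M(1) M0(1)] M(2) by auto
  qed
  have "\<forall>w\<in>t. finite (supp w)" using t(2) V_dual(1) by (force simp: PMk_iff)
  then have "pairing (W k M0) (\<lambda>N. \<Sum>w\<in>t. u w * w N) = (\<Sum>w\<in>t. u w * pairing (W k M0) w)"
    using pairing_sum[OF t(1), of "\<lambda>w. w"] by blast
  also have "\<dots> = (\<Sum>w\<in>t. if w = v then u w else 0)"
    by (rule sum.cong[OF refl]) (simp add: coeff)
  also have "\<dots> = u v" using t(1) v by simp
  finally have "pairing (W k M0) (\<lambda>N. \<Sum>w\<in>t. u w * w N) = u v" .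
  moreover have "(\<lambda>N. \<Sum>w\<in>t. u w * w N) = 0" using zero by (simp add: sum_scl)
  ultimately show "u v = 0" by simp
qed

lemma span_V_connected: "module.span (scl :: 'a::field \<Rightarrow> _) (V k ` {M. connected k M}) = prim k"
proof
  show "module.span scl (V k ` {M. connected k M}) \<subseteq> (prim k :: (mat \<Rightarrow> 'a) set)"
    by (rule module.span_minimal[OF module_scl _ prim_subspace]) (use V_prim in blast)
next
  show "prim k \<subseteq> module.span (scl :: 'a \<Rightarrow> _) (V k ` {M. connected k M})"
  proof
    fix x :: "mat \<Rightarrow> 'a" assume x: "x \<in> prim k"
    then have "x \<in> PMk k" by (simp add: prim_iff)
    then obtain S where S: "finite S" "\<forall>M\<in>S. packed k M"
      and expand: "x = (\<lambda>N. \<Sum>M\<in>S. pairing (W k M) x * V k M N)"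
      by (rule expansion_in_V)
    have "x = (\<lambda>N. \<Sum>M\<in>S \<inter> {M. connected k M}. pairing (W k M) x * V k M N)"
      by (subst expand, rule ext, rule sum.mono_neutral_right[OF S(1)])
        (use pairing_W_prim_not_connected[OF x] S(2) in auto)
    also have "\<dots> = (\<Sum>M\<in>S \<inter> {M. connected k M}. scl (pairing (W k M) x) (V k M))"
      by (simp add: sum_scl)
    also have "\<dots> \<in> module.span scl (V k ` {M. connected k M})"
      by (intro module.span_sum[OF module_scl] module.span_scale[OF module_scl]
          module.span_base[OF module_scl]) auto
    finally show "x \<in> module.span scl (V k ` {M. connected k M})" .
  qed
qed

theorem proposition2p6:
  fixes k :: nat
  assumes "k \<ge> 1"
  shows "inj_on (V k :: mat \<Rightarrow> mat \<Rightarrow> 'a::field) {M. connected k M}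
       \<and> \<not> module.dependent (scl :: 'a \<Rightarrow> _) (V k ` {M. connected k M})
       \<and> module.span (scl :: 'a \<Rightarrow> _) (V k ` {M. connected k M}) = prim k"
proof -
  have connected_sub: "{M. connected k M} \<subseteq> {M. packed k M}" using connected_packed by blast
  show ?thesis
    using inj_on_subset[OF inj_on_V connected_sub]
      module.independent_mono[OF module_scl V_independent image_mono[OF connected_sub]]
      span_V_connected
    by blast
qed

end
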